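(* Let $\alpha\in\mathbb{R}\setminus\{-1,0\}$, equip $\mathrm{St}(n,k)$ with the $\alpha$-metric, fix $X\in\mathrm{St}(n,k)$, and let $\beta\colon I\to T_X\mathrm{St}(n,k)$ be a curve with associated control curve $u(t)=\big(d_{(I_n,I_k)}(\iota_X\circ\pi)|_{\mathfrak p}\big)^{-1}(\dot\beta(t))\in\mathfrak p$. Let $S\colon I\to O(\mathfrak p)$ and $q=(R,\theta)\colon I\to O(n)\times O(k)$ solve $$\dot S(t)=-\tfrac12\,\mathrm{pr}_{\mathfrak p}\circ\mathrm{ad}_{S(t)u(t)}\circ S(t),\ S(0)=\mathrm{id}_{\mathfrak p},\qquad \dot q(t)=d_{(I_n,I_k)}L_{q(t)}\big(S(t)u(t)\big),\ q(0)=(I_n,I_k).$$ Then $(\beta(t),\widehat\beta(t),B(t))$ is an intrinsic rolling of $T_X\mathrm{St}(n,k)$ over $\mathrm{St}(n,k)$, where $\widehat\beta(t)=(\iota_X\circ\pi)(q(t))=R(t)X\theta(t)^\top$ and $$B(t)=d_{q(t)}(\iota_X\circ\pi)\circ d_{(I_n,I_k)}L_{q(t)}\circ S(t)\circ\big(d_{(I_n,I_k)}(\iota_X\circ\pi)|_{\mathfrak p}\big)^{-1}.$$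
   Context: $\mathrm{St}(n,k)=\{Y\in\mathbb{R}^{n\times k}:Y^\top Y=I_k\}$; $G=O(n)\times O(k)$ acts by $(R,\theta)\cdot Y=RY\theta^\top$, $H$ is the stabilizer of $X$, $\pi\colon G\to G/H$, $\iota_X\colon G/H\to\mathrm{St}(n,k)$, $(R,\theta)H\mapsto RX\theta^\top$; $L_g$ is left translation. On $\mathfrak g=\mathfrak{so}(n)\times\mathfrak{so}(k)$ put $\langle(\Omega_1,\Psi_1),(\Omega_2,\Psi_2)\rangle^\alpha=-\operatorname{tr}(\Omega_1\Omega_2)-\tfrac1\alpha\operatorname{tr}(\Psi_1\Psi_2)$; $\mathfrak h=\{(\Omega,\eta):\Omega X=X\eta\}$, $\mathfrak p=\mathfrak h^\perp$ (nondegenerate for $\alpha\neq-1,0$). The $\alpha$-metric is the $G$-invariant metric on $G/H\cong\mathrm{St}(n,k)$ making $\pi$ a pseudo-Riemannian submersion for the bi-invariant metric defined by $\langle\cdot,\cdot\rangle^\alpha$; on $\mathrm{St}(n,k)$ it reads $\langle V,W\rangle_Y=2\operatorname{tr}(V^\top W)+\tfrac{2\alpha+1}{\alpha+1}\operatorname{tr}(V^\top YY^\top W)$. The projection onto $\mathfrak p$ along $\mathfrak h$ is $\mathrm{pr}_{\mathfrak p}(\Omega,\eta)=\big(XX^\top\Omega+\Omega XX^\top-\tfrac{2\alpha+1}{\alpha+1}XX^\top\Omega XX^\top-\tfrac1{\alpha+1}X\eta X^\top,\ \tfrac{\alpha}{\alpha+1}(\eta-X^\top\Omega X)\big)$; $d_{(I_n,I_k)}(\iota_X\circ\pi)|_{\mathfrak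 p}\colon(\Omega,\eta)\mapsto\Omega X-X\eta$ is a linear isometry $\mathfrak p\to T_X\mathrm{St}(n,k)$ with inverse $V\mapsto\big(VX^\top-XV^\top+\tfrac{2\alpha+1}{\alpha+1}XV^\top XX^\top,\ -\tfrac{\alpha}{\alpha+1}X^\top V\big)$. $O(\mathfrak p)$ is the isometry group of $(\mathfrak p,\langle\cdot,\cdot\rangle^\alpha)$. An intrinsic rolling of $T_X\mathrm{St}(n,k)$ (with scalar product $\langle\cdot,\cdot\rangle_X$) over $\mathrm{St}(n,k)$ is a triple of a curve $\beta$ in $T_X\mathrm{St}(n,k)$, a curve $\widehat\beta$ in $\mathrm{St}(n,k)$ and linear isometries $B(t)\colon T_X\mathrm{St}(n,k)\to T_{\widehat\beta(t)}\mathrm{St}(n,k)$ such that $\dot{\widehat\beta}(t)=B(t)\dot\beta(t)$ and $B(t)Z(t)$ is parallel (Levi-Civita of the $\alpha$-metric) along $\widehat\beta$ iff $Z(t)$ is parallel along $\beta$, i.e. constant. *)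

theory Defs
  imports "HOL-Analysis.Analysis"
begin

(* n x k real matrices are  real^'k^'n  (rows indexed by 'n); n = CARD('n), k = CARD('k). *)

definition stiefel :: "(real^'k^'n) set" where
  "stiefel = {Y. transpose Y ** Y = mat 1}"

definition tangent_st :: "real^'k^'n \<Rightarrow> (real^'k^'n) set" where
  "tangent_st Y = {V. transpose Y ** V + transpose V ** Y = 0}"

definition alpha_metric :: "real \<Rightarrow> real^'k^'n \<Rightarrow> real^'k^'n \<Rightarrow> real^'k^'n \<Rightarrow> real" where
  "alpha_metric a Y V W =
     2 * trace (transpose V ** W) - (2*a+1)/(a+1) * trace (transpose V ** Y ** transpose Y ** W)"

definition metric_deriv :: "real \<Rightarrow> real^'k^'n \<Rightarrow> real^'k^'n \<Rightarrow> real^'k^'n \<Rightarrow> real^'k^'n \<Rightarrow> real" where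
  "metric_deriv a Y U V W = frechet_derivative (\<lambda>Z. alpha_metric a Z V W) (at Y) U"

(* W is a Levi-Civita parallel vector field along the curve \<gamma> in St(n,k) on I
   (covariant derivative along \<gamma> given by the Koszul formula for the induced metric) *)
definition parallel_along ::
  "real \<Rightarrow> (real \<Rightarrow> real^'k^'n) \<Rightarrow> (real \<Rightarrow> real^'k^'n) \<Rightarrow> real set \<Rightarrow> bool" where
  "parallel_along a \<gamma> W I \<longleftrightarrow>
     (\<exists>\<gamma>' W'. (\<forall>t\<in>I. (\<gamma> has_vector_derivative \<gamma>' t) (at t within I)
                     \<and> (W has_vector_derivative W' t) (at t within I))
       \<and> (\<forall>t\<in>I. W t \<in> tangent_st (\<gamma> t) \<and>
              (\<forall>U\<in>tangent_st (\<gamma> t).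
                 alpha_metric a (\<gamma> t) (W' t) U
                 + 1/2 * (metric_deriv a (\<gamma> t) (\<gamma>' t) (W t) U
                          + metric_deriv a (\<gamma> t) (W t) (\<gamma>' t) U
                          - metric_deriv a (\<gamma> t) U (\<gamma>' t) (W t)) = 0)))"

definition lin_isometry_st :: "real \<Rightarrow> real^'k^'n \<Rightarrow> real^'k^'n \<Rightarrow> (real^'k^'n \<Rightarrow> real^'k^'n) \<Rightarrow> bool" where
  "lin_isometry_st a X Y L \<longleftrightarrow>
     (\<forall>V\<in>tangent_st X. \<forall>W\<in>tangent_st X. \<forall>c d. L (c *\<^sub>R V + d *\<^sub>R W) = c *\<^sub>R L V + d *\<^sub>R L W)
     \<and> bij_betw L (tangent_st X) (tangent_st Y)
     \<and> (\<forall>V\<in>tangent_st X. \<forall>W\<in>tangent_st X. alpha_metric a Y (L V) (L W) = alpha_metric a X V W)"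

definition intrinsic_rolling ::
  "real \<Rightarrow> real^'k^'n \<Rightarrow> real set \<Rightarrow> (real \<Rightarrow> real^'k^'n) \<Rightarrow> (real \<Rightarrow> real^'k^'n)
    \<Rightarrow> (real \<Rightarrow> real^'k^'n \<Rightarrow> real^'k^'n) \<Rightarrow> bool" where
  "intrinsic_rolling a X I \<beta> \<beta>h B \<longleftrightarrow>
     (\<forall>t\<in>I. \<beta> t \<in> tangent_st X \<and> \<beta>h t \<in> stiefel \<and> lin_isometry_st a X (\<beta>h t) (B t))
     \<and> (\<forall>t\<in>I. \<exists>v. (\<beta> has_vector_derivative v) (at t within I)
                  \<and> (\<beta>h has_vector_derivative B t v) (at t within I))
     \<and> (\<forall>Z. (\<forall>t\<in>I. Z t \<in> tangent_st X \<and> Z differentiable (at t within I)) \<longrightarrow>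
            (parallel_along a \<beta>h (\<lambda>t. B t (Z t)) I
               \<longleftrightarrow> (\<forall>t\<in>I. (Z has_vector_derivative 0) (at t within I))))"

definition gla :: "((real^'n^'n) \<times> (real^'k^'k)) set" where
  "gla = {p. transpose (fst p) = - fst p \<and> transpose (snd p) = - snd p}"

definition ip_alpha :: "real \<Rightarrow> (real^'n^'n) \<times> (real^'k^'k) \<Rightarrow> (real^'n^'n) \<times> (real^'k^'k) \<Rightarrow> real" where
  "ip_alpha a p q = - trace (fst p ** fst q) - 1/a * trace (snd p ** snd q)"

definition hla :: "real^'k^'n \<Rightarrow> ((real^'n^'n) \<times> (real^'k^'k)) set" where
  "hla X = {p \<in> gla. fst p ** X = X ** snd p}"

definition pla :: "real \<Rightarrow> real^'k^'n \<Rightarrow> ((real^'n^'n) \<times> (real^'k^'k)) set" where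
  "pla a X = {p \<in> gla. \<forall>h\<in>hla X. ip_alpha a p h = 0}"

definition pr_p :: "real \<Rightarrow> real^'k^'n \<Rightarrow> (real^'n^'n) \<times> (real^'k^'k) \<Rightarrow> (real^'n^'n) \<times> (real^'k^'k)" where
  "pr_p a X \<xi> = (THE p. p \<in> pla a X \<and> \<xi> - p \<in> hla X)"

definition lie_bracket :: "(real^'n^'n) \<times> (real^'k^'k) \<Rightarrow> (real^'n^'n) \<times> (real^'k^'k) \<Rightarrow> (real^'n^'n) \<times> (real^'k^'k)" where
  "lie_bracket p q = (fst p ** fst q - fst q ** fst p, snd p ** snd q - snd q ** snd p)"

definition O_p :: "real \<Rightarrow> real^'k^'n \<Rightarrow> ((real^'n^'n) \<times> (real^'k^'k) \<Rightarrow> (real^'n^'n) \<times> (real^'k^'k)) set" where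
  "O_p a X = {T. (\<forall>\<xi>\<in>pla a X. \<forall>\<eta>\<in>pla a X. \<forall>c d. T (c *\<^sub>R \<xi> + d *\<^sub>R \<eta>) = c *\<^sub>R T \<xi> + d *\<^sub>R T \<eta>)
               \<and> bij_betw T (pla a X) (pla a X)
               \<and> (\<forall>\<xi>\<in>pla a X. \<forall>\<eta>\<in>pla a X. ip_alpha a (T \<xi>) (T \<eta>) = ip_alpha a \<xi> \<eta>)}"

definition iota_pi :: "real^'k^'n \<Rightarrow> (real^'n^'n) \<times> (real^'k^'k) \<Rightarrow> real^'k^'n" where
  "iota_pi X g = fst g ** X ** transpose (snd g)"

definition d_iota_pi :: "real^'k^'n \<Rightarrow> (real^'n^'n) \<times> (real^'k^'k) \<Rightarrow> real^'k^'n" where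
  "d_iota_pi X \<xi> = fst \<xi> ** X - X ** snd \<xi>"

definition d_iota_pi_inv :: "real \<Rightarrow> real^'k^'n \<Rightarrow> real^'k^'n \<Rightarrow> (real^'n^'n) \<times> (real^'k^'k)" where
  "d_iota_pi_inv a X V = (THE \<xi>. \<xi> \<in> pla a X \<and> d_iota_pi X \<xi> = V)"

definition dL :: "(real^'n^'n) \<times> (real^'k^'k) \<Rightarrow> (real^'n^'n) \<times> (real^'k^'k) \<Rightarrow> (real^'n^'n) \<times> (real^'k^'k)" where
  "dL g \<xi> = (fst g ** fst \<xi>, snd g ** snd \<xi>)"

definition d_iota_pi_at :: "real^'k^'n \<Rightarrow> (real^'n^'n) \<times> (real^'k^'k) \<Rightarrow> (real^'n^'n) \<times> (real^'k^'k) \<Rightarrow> real^'k^'n" where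
  "d_iota_pi_at X g v = fst v ** X ** transpose (snd g) + fst g ** X ** transpose (snd v)"

end

theory Submission
  imports Defs
begin

text \<open>The group \<open>O(n) \<times> O(k)\<close> acts by isometries: the \<open>\<alpha>\<close>-metric, its derivative and hence
  the Koszul form are invariant under \<open>Y \<mapsto> R Y \<theta>\<^sup>T\<close>, so the covariant derivative of
  \<open>B(t) Z(t)\<close> along the rolled curve can be computed at \<open>X\<close>. There the inverse of
  \<open>d(\<iota>\<^sub>X \<circ> \<pi>)\<close> on \<open>p\<close> has a closed form, and a direct computation shows: if
  \<open>(\<Omega>, \<eta>)\<close> lifts the velocity \<open>V\<close>, a field through \<open>W\<close> with ambient derivative
  \<open>\<Omega> W - W \<eta> - 1/2 d[lift V, lift W]\<close> has vanishing Koszul form, because its gradient is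
  \<open>X S\<close> with \<open>S\<close> symmetric, i.e. normal to the Stiefel manifold. The equations for \<open>S\<close> and
  \<open>q = (R, \<theta>)\<close> make the ambient derivative of \<open>B(t) Z(t)\<close> the transport of this expression
  plus \<open>B(t) Z'(t)\<close>. Hence the covariant derivative of \<open>B(t) Z(t)\<close> is \<open>B(t) Z'(t)\<close>, and
  since \<open>B(t)\<close> is an isometry and the \<open>\<alpha>\<close>-metric is nondegenerate, \<open>B(t) Z(t)\<close> is
  parallel iff \<open>Z' = 0\<close>.\<close>

section \<open>Matrix algebra\<close>

lemma matrix_add_rdistrib: "(A + B) ** C = A ** C + B ** (C::'a::semiring_1^'p^'m)"
  by (vector matrix_matrix_mult_def sum.distrib[symmetric] distrib_right)

lemma matrix_diff_ldistrib: "A ** (B - C) = A ** B - A ** (C::'a::ring_1^'p^'m)"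
  by (vector matrix_matrix_mult_def sum_subtractf[symmetric] right_diff_distrib)

lemma matrix_diff_rdistrib: "(A - B) ** C = A ** C - B ** (C::'a::ring_1^'p^'m)"
  by (vector matrix_matrix_mult_def sum_subtractf[symmetric] left_diff_distrib)

lemma matrix_uminus_left: "(- A) ** B = - (A ** (B::'a::ring_1^'p^'m))"
  by (vector matrix_matrix_mult_def sum_negf[symmetric])

lemma matrix_uminus_right: "A ** (- B) = - (A ** (B::'a::ring_1^'p^'m))"
  by (vector matrix_matrix_mult_def sum_negf[symmetric])

lemma matrix_scaleR_left: "(c *\<^sub>R A) ** B = c *\<^sub>R (A ** (B::'a::real_algebra_1^'p^'m))"
  by (simp add: scalar_matrix_assoc)

lemma matrix_scaleR_right: "A ** (c *\<^sub>R B) = c *\<^sub>R (A ** (B::'a::real_algebra_1^'p^'m))"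
  by (simp add: matrix_scalar_ac scalar_matrix_assoc)

lemma transpose_add: "transpose (A + B) = transpose A + transpose (B::'a::semiring_1^'m^'n)"
  by (vector transpose_def)

lemma transpose_diff: "transpose (A - B) = transpose A - transpose (B::'a::ring_1^'m^'n)"
  by (vector transpose_def)

lemma transpose_uminus: "transpose (- A) = - transpose (A::'a::ring_1^'m^'n)"
  by (vector transpose_def)

lemma transpose_zero: "transpose (0::'a::zero^'m^'n) = 0"
  by (vector transpose_def)

lemmas matrix_ring_simps = matrix_add_ldistrib matrix_add_rdistrib matrix_diff_ldistrib
  matrix_diff_rdistrib matrix_uminus_left matrix_uminus_right matrix_scaleR_left matrix_scaleR_right
  matrix_mul_assoc[symmetric] transpose_add transpose_diff transpose_uminus transpose_scalar
  matrix_transpose_mul transpose_transpose times0_left times0_right transpose_zero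

lemma trace_scaleR: "trace (c *\<^sub>R (A::real^'n^'n)) = c * trace A"
  by (simp add: trace_def sum_distrib_left)

lemma trace_uminus: "trace (- (A::'a::comm_ring_1^'n^'n)) = - trace A"
  by (simp add: trace_def sum_negf)

lemma trace_transpose: "trace (transpose (A::'a::comm_semiring_1^'n^'n)) = trace A"
  by (simp add: trace_def transpose_def)

lemma trace_zero: "trace (0::'a::comm_semiring_1^'n^'n) = 0"
  by (simp add: trace_def)

lemmas trace_simps = trace_add trace_sub trace_scaleR trace_uminus trace_zero

lemma trace_transpose_mult_self: "trace (transpose A ** (A::real^'k^'n)) = (\<Sum>i\<in>UNIV. \<Sum>j\<in>UNIV. (A$j$i)\<^sup>2)"
  by (simp add: trace_def matrix_matrix_mult_def transpose_def power2_eq_square)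

lemma trace_transpose_mult_self_nonneg: "trace (transpose A ** (A::real^'k^'n)) \<ge> 0"
  unfolding trace_transpose_mult_self by (intro sum_nonneg) auto

lemma trace_transpose_mult_self_eq_0_iff: "trace (transpose A ** (A::real^'k^'n)) = 0 \<longleftrightarrow> A = 0"
proof
  assume "trace (transpose A ** A) = 0"
  then have "\<forall>i. (\<Sum>j\<in>UNIV. (A$j$i)\<^sup>2) = 0"
    unfolding trace_transpose_mult_self by (subst (asm) sum_nonneg_eq_0_iff) (auto intro: sum_nonneg)
  then show "A = 0"
    by (simp add: sum_nonneg_eq_0_iff vec_eq_iff)
qed (simp add: trace_zero)

lemma skew_eq_0_if_trace_square_eq_0:
  "transpose M = - M \<Longrightarrow> trace (M ** M) = 0 \<Longrightarrow> M = (0::real^'n^'n)"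
proof -
  assume "transpose M = - M" and "trace (M ** M) = 0"
  then have "trace (transpose M ** M) = 0"
    by (simp add: matrix_uminus_left trace_uminus)
  then show ?thesis
    by (simp add: trace_transpose_mult_self_eq_0_iff)
qed

lemma trace_symmetric_mult_skew:
  assumes "transpose S = S" and "transpose M = - M"
  shows "trace (S ** (M::real^'n^'n)) = 0"
proof -
  have "trace (S ** M) = trace (transpose (S ** M))"
    by (simp only: trace_transpose)
  also have "\<dots> = - trace (M ** S)"
    using assms by (simp add: matrix_transpose_mul matrix_uminus_left trace_uminus)
  also have "\<dots> = - trace (S ** M)"
    by (simp only: trace_mul_sym[of M S])
  finally show ?thesis
    by simp
qed

lemma trace_conj_orthogonal:
  assumes "transpose T ** T = mat 1"
  shows "trace (T ** A ** transpose (T::real^'k^'k)) = trace A"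
proof -
  have "trace (T ** A ** transpose T) = trace (transpose T ** (T ** A))"
    by (rule trace_mul_sym)
  then show ?thesis
    by (simp add: assms matrix_mul_assoc)
qed

lemma bounded_bilinear_matrix_mult:
  "bounded_bilinear ((**) :: real^'m^'n \<Rightarrow> real^'p^'m \<Rightarrow> real^'p^'n)"
  unfolding bilinear_conv_bounded_bilinear[symmetric] bilinear_def linear_iff
  by (simp add: matrix_add_ldistrib matrix_add_rdistrib matrix_scaleR_left matrix_scaleR_right)

lemma bounded_linear_transpose: "bounded_linear (transpose :: real^'m^'n \<Rightarrow> real^'n^'m)"
  unfolding linear_conv_bounded_linear[symmetric] linear_iff by (simp add: transpose_add transpose_scalar)

lemma bounded_linear_trace: "bounded_linear (trace :: real^'n^'n \<Rightarrow> real)"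
  unfolding linear_conv_bounded_linear[symmetric] linear_iff by (simp add: trace_add trace_scaleR)

lemma matrix_left_inverse_cancel: "A ** B = mat 1 \<Longrightarrow> A ** (B ** C) = (C::'a::semiring_1^'p^'m)"
  by (simp add: matrix_mul_assoc)

lemma matrix_mult_eq_0_cancel: "A ** B = 0 \<Longrightarrow> A ** (B ** C) = (0::'a::semiring_1^'p^'m)"
  by (simp add: matrix_mul_assoc)

lemma transpose_mult_eq_0: "transpose A ** B = 0 \<Longrightarrow> transpose B ** (A::'a::comm_semiring_1^'m^'n) = 0"
  by (metis matrix_transpose_mul transpose_transpose transpose_zero)

section \<open>Tangent spaces, the \<open>\<alpha>\<close>-metric and its Koszul form\<close>

lemma tangent_st_iff: "V \<in> tangent_st X \<longleftrightarrow> transpose V ** X = - (transpose X ** V)"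
  unfolding tangent_st_def by (simp add: eq_neg_iff_add_eq_0 add.commute)

lemma zero_in_tangent_st: "0 \<in> tangent_st X"
  by (simp add: tangent_st_def transpose_zero)

lemma tangent_st_lincomb:
  assumes "V \<in> tangent_st X" and "W \<in> tangent_st X"
  shows "c *\<^sub>R V + d *\<^sub>R W \<in> tangent_st X"
proof -
  have "transpose X ** (c *\<^sub>R V + d *\<^sub>R W) + transpose (c *\<^sub>R V + d *\<^sub>R W) ** X
     = c *\<^sub>R (transpose X ** V + transpose V ** X) + d *\<^sub>R (transpose X ** W + transpose W ** X)"
    by (simp add: matrix_ring_simps algebra_simps)
  then show ?thesis
    using assms unfolding tangent_st_def by simp
qed

lemma tangent_st_decomp:
  assumes X: "transpose X ** X = mat 1" and V: "V \<in> tangent_st X"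
  obtains \<Omega> K where "V = X ** \<Omega> + K" and "transpose X ** K = 0" and "transpose \<Omega> = - \<Omega>"
proof
  show "V = X ** (transpose X ** V) + (V - X ** (transpose X ** V))"
    by simp
  show "transpose X ** (V - X ** (transpose X ** V)) = 0"
    by (simp add: matrix_diff_ldistrib matrix_mul_assoc X)
  show "transpose (transpose X ** V) = - (transpose X ** V)"
    using V by (simp add: tangent_st_iff matrix_transpose_mul)
qed

lemma tangent_st_conj_iff:
  fixes R :: "real^'n^'n" and T :: "real^'k^'k" and Y U :: "real^'k^'n"
  assumes R: "transpose R ** R = mat 1" and T: "transpose T ** T = mat 1"
  shows "R ** U ** transpose T \<in> tangent_st (R ** Y ** transpose T) \<longleftrightarrow> U \<in> tangent_st Y"
proof -
  note cancel = matrix_left_inverse_cancel[OF R] matrix_left_inverse_cancel[OF T]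
  have "transpose (R ** Y ** transpose T) ** (R ** U ** transpose T)
      + transpose (R ** U ** transpose T) ** (R ** Y ** transpose T)
    = T ** (transpose Y ** U + transpose U ** Y) ** transpose T"
    by (simp add: matrix_ring_simps R cancel)
  moreover have "transpose T ** (T ** Z ** transpose T) ** T = Z" for Z :: "real^'k^'k"
    by (simp add: matrix_ring_simps T cancel)
  ultimately show ?thesis
    unfolding tangent_st_def mem_Collect_eq by (metis times0_left times0_right)
qed

lemma bij_betw_conj_tangent_st:
  fixes R :: "real^'n^'n" and T :: "real^'k^'k" and Y :: "real^'k^'n"
  assumes "orthogonal_matrix R" and "orthogonal_matrix T"
  shows "bij_betw (\<lambda>U. R ** U ** transpose T) (tangent_st Y) (tangent_st (R ** Y ** transpose T))"
proof (rule bij_betw_byWitness[where f'="\<lambda>U. transpose R ** U ** T"])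
  have R: "transpose R ** R = mat 1" "R ** transpose R = mat 1"
    and T: "transpose T ** T = mat 1" "T ** transpose T = mat 1"
    using assms by (auto simp: orthogonal_matrix_def)
  note cancel = matrix_left_inverse_cancel[OF R(1)] matrix_left_inverse_cancel[OF R(2)]
    matrix_left_inverse_cancel[OF T(1)] matrix_left_inverse_cancel[OF T(2)]
  have inverse: "R ** (transpose R ** U ** T) ** transpose T = U" for U :: "real^'k^'n"
    by (simp add: matrix_ring_simps R T cancel)
  show "\<forall>U\<in>tangent_st Y. transpose R ** (R ** U ** transpose T) ** T = U"
    by (simp add: matrix_ring_simps R T cancel)
  show "\<forall>U\<in>tangent_st (R ** Y ** transpose T). R ** (transpose R ** U ** T) ** transpose T = U"
    using inverse by simp
  show "(\<lambda>U. R ** U ** transpose T) ` tangent_st Y \<subseteq> tangent_st (R ** Y ** transpose T)"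
    using tangent_st_conj_iff[OF R(1) T(1)] by auto
  show "(\<lambda>U. transpose R ** U ** T) ` tangent_st (R ** Y ** transpose T) \<subseteq> tangent_st Y"
    using tangent_st_conj_iff[OF R(1) T(1)] inverse by (metis image_subsetI)
qed

lemma iota_pi_in_stiefel:
  fixes X :: "real^'k^'n" and R :: "real^'n^'n" and \<theta> :: "real^'k^'k"
  assumes "X \<in> stiefel" and "orthogonal_matrix R" and "orthogonal_matrix \<theta>"
  shows "iota_pi X (R, \<theta>) \<in> stiefel"
proof -
  have R: "transpose R ** R = mat 1" and T: "\<theta> ** transpose \<theta> = mat 1"
    using assms(2,3) by (auto simp: orthogonal_matrix_def)
  have X: "transpose X ** X = mat 1"
    using assms(1) by (simp add: stiefel_def)
  show ?thesis
    unfolding stiefel_def iota_pi_def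
    by (simp add: matrix_ring_simps matrix_left_inverse_cancel[OF R] matrix_left_inverse_cancel[OF X] T)
qed

lemma alpha_metric_add_left: "alpha_metric a Y (M + N) U = alpha_metric a Y M U + alpha_metric a Y N U"
  unfolding alpha_metric_def by (simp add: matrix_ring_simps trace_simps algebra_simps)

lemma alpha_metric_zero_left: "alpha_metric a Y 0 U = 0"
  unfolding alpha_metric_def by (simp add: transpose_zero trace_zero)

lemma alpha_metric_conj:
  fixes R :: "real^'n^'n" and T :: "real^'k^'k" and Y M N :: "real^'k^'n"
  assumes R: "transpose R ** R = mat 1" and T: "transpose T ** T = mat 1"
  shows "alpha_metric a (R ** Y ** transpose T) (R ** M ** transpose T) (R ** N ** transpose T)
       = alpha_metric a Y M N"
proof -
  note cancel = matrix_left_inverse_cancel[OF R] matrix_left_inverse_cancel[OF T]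
  have "transpose (R ** M ** transpose T) ** (R ** N ** transpose T)
      = T ** (transpose M ** N) ** transpose T"
    by (simp add: matrix_ring_simps R cancel)
  moreover have "transpose (R ** M ** transpose T) ** (R ** Y ** transpose T)
        ** transpose (R ** Y ** transpose T) ** (R ** N ** transpose T)
      = T ** (transpose M ** Y ** transpose Y ** N) ** transpose T"
    by (simp add: matrix_ring_simps R T cancel)
  ultimately show ?thesis
    unfolding alpha_metric_def by (simp only: trace_conj_orthogonal[OF T])
qed

lemma alpha_metric_nondegenerate:
  fixes Y M :: "real^'k^'n"
  assumes Y: "transpose Y ** Y = mat 1" and a: "a \<noteq> -1" and M: "M \<in> tangent_st Y"
    and orth: "\<forall>U\<in>tangent_st Y. alpha_metric a Y M U = 0"
  shows "M = 0"
proof -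
  obtain \<Omega> K where M_eq: "M = Y ** \<Omega> + K" and K: "transpose Y ** K = 0"
    and \<Omega>: "transpose \<Omega> = - \<Omega>"
    using tangent_st_decomp[OF Y M] .
  have KY: "transpose K ** Y = 0"
    using K by (rule transpose_mult_eq_0)
  note cancel = matrix_left_inverse_cancel[OF Y] matrix_mult_eq_0_cancel[OF K]
    matrix_mult_eq_0_cancel[OF KY]
  \<comment> \<open>testing \<open>M\<close> against \<open>(a + 1) Y \<Omega> + K\<close> gives a sum of squares\<close>
  define U where "U = (a + 1) *\<^sub>R (Y ** \<Omega>) + K"
  have "U \<in> tangent_st Y"
    unfolding tangent_st_def U_def by (simp add: matrix_ring_simps Y cancel K KY \<Omega>)
  moreover have "alpha_metric a Y M U = trace (transpose \<Omega> ** \<Omega>) + 2 * trace (transpose K ** K)"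
    unfolding alpha_metric_def U_def M_eq
    using a by (simp add: matrix_ring_simps Y cancel K KY trace_simps field_simps)
  ultimately have "trace (transpose \<Omega> ** \<Omega>) + 2 * trace (transpose K ** K) = 0"
    using orth by auto
  then have "trace (transpose \<Omega> ** \<Omega>) = 0" and "trace (transpose K ** K) = 0"
    using trace_transpose_mult_self_nonneg[of \<Omega>] trace_transpose_mult_self_nonneg[of K] by linarith+
  then show ?thesis
    using M_eq by (simp add: trace_transpose_mult_self_eq_0_iff)
qed

lemma has_derivative_alpha_metric:
  fixes Y V W :: "real^'k^'n"
  shows "((\<lambda>Z. alpha_metric a Z V W) has_derivative
     (\<lambda>U. - ((2*a+1)/(a+1)) * (trace (transpose V ** U ** transpose Y ** W)
                              + trace (transpose V ** Y ** transpose U ** W)))) (at Y)"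
proof -
  note mult = bounded_bilinear_matrix_mult
  have "((\<lambda>Z. transpose V ** Z) has_derivative (\<lambda>U. transpose V ** U)) (at Y)"
    using bounded_linear.has_derivative[OF bounded_bilinear.bounded_linear_right[OF mult]
        has_derivative_ident] .
  moreover have "((\<lambda>Z::real^'k^'n. transpose Z) has_derivative (\<lambda>U. transpose U)) (at Y)"
    using bounded_linear.has_derivative[OF bounded_linear_transpose has_derivative_ident] .
  ultimately have "((\<lambda>Z. transpose V ** Z ** transpose Z) has_derivative
      (\<lambda>U. transpose V ** Y ** transpose U + transpose V ** U ** transpose Y)) (at Y)"
    by (rule bounded_bilinear.FDERIV[OF mult])
  then have "((\<lambda>Z. transpose V ** Z ** transpose Z ** W) has_derivative
      (\<lambda>U. (transpose V ** Y ** transpose U + transpose V ** U ** transpose Y) ** W)) (at Y)"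
    by (rule bounded_linear.has_derivative[OF bounded_bilinear.bounded_linear_left[OF mult]])
  then have "((\<lambda>Z. trace (transpose V ** Z ** transpose Z ** W)) has_derivative
      (\<lambda>U. trace ((transpose V ** Y ** transpose U + transpose V ** U ** transpose Y) ** W))) (at Y)"
    by (rule bounded_linear.has_derivative[OF bounded_linear_trace])
  then have "((\<lambda>Z. alpha_metric a Z V W) has_derivative (\<lambda>U. 0 - (2*a+1)/(a+1)
      * trace ((transpose V ** Y ** transpose U + transpose V ** U ** transpose Y) ** W))) (at Y)"
    unfolding alpha_metric_def by (intro has_derivative_diff has_derivative_const has_derivative_mult_right)
  then show ?thesis
    by (rule has_derivative_eq_rhs) (simp add: matrix_add_rdistrib trace_add fun_eq_iff)
qed

lemma metric_deriv_eq:
  "metric_deriv a Y U V W = - ((2*a+1)/(a+1))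
     * (trace (transpose V ** U ** transpose Y ** W) + trace (transpose V ** Y ** transpose U ** W))"
  unfolding metric_deriv_def frechet_derivative_at[OF has_derivative_alpha_metric, symmetric] ..

lemma metric_deriv_conj:
  fixes R :: "real^'n^'n" and T :: "real^'k^'k" and Y U M N :: "real^'k^'n"
  assumes R: "transpose R ** R = mat 1" and T: "transpose T ** T = mat 1"
  shows "metric_deriv a (R ** Y ** transpose T) (R ** U ** transpose T) (R ** M ** transpose T)
      (R ** N ** transpose T) = metric_deriv a Y U M N"
proof -
  note cancel = matrix_left_inverse_cancel[OF R] matrix_left_inverse_cancel[OF T]
  have "transpose (R ** M ** transpose T) ** (R ** U ** transpose T)
        ** transpose (R ** Y ** transpose T) ** (R ** N ** transpose T)
      = T ** (transpose M ** U ** transpose Y ** N) ** transpose T"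
    by (simp add: matrix_ring_simps R T cancel)
  moreover have "transpose (R ** M ** transpose T) ** (R ** Y ** transpose T)
        ** transpose (R ** U ** transpose T) ** (R ** N ** transpose T)
      = T ** (transpose M ** Y ** transpose U ** N) ** transpose T"
    by (simp add: matrix_ring_simps R T cancel)
  ultimately show ?thesis
    unfolding metric_deriv_eq by (simp only: trace_conj_orthogonal[OF T])
qed

text \<open>For a vector field \<open>W\<close> along a curve through \<open>Y\<close> with velocity \<open>G\<close>, whose ambient
  derivative is \<open>W'\<close>, the Koszul formula gives \<open>koszul_form a Y G W W' U\<close> as the
  \<open>\<alpha>\<close>-inner product of the covariant derivative of \<open>W\<close> with \<open>U\<close>.\<close>

definition koszul_form ::
  "real \<Rightarrow> real^'k^'n \<Rightarrow> real^'k^'n \<Rightarrow> real^'k^'n \<Rightarrow> real^'k^'n \<Rightarrow> real^'k^'n \<Rightarrow> real" where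
  "koszul_form a Y G W W' U = alpha_metric a Y W' U
     + 1/2 * (metric_deriv a Y G W U + metric_deriv a Y W G U - metric_deriv a Y U G W)"

lemma parallel_along_iff_koszul_form:
  "parallel_along a \<gamma> W I \<longleftrightarrow>
     (\<exists>\<gamma>' W'. (\<forall>t\<in>I. (\<gamma> has_vector_derivative \<gamma>' t) (at t within I)
                     \<and> (W has_vector_derivative W' t) (at t within I))
       \<and> (\<forall>t\<in>I. W t \<in> tangent_st (\<gamma> t) \<and>
              (\<forall>U\<in>tangent_st (\<gamma> t). koszul_form a (\<gamma> t) (\<gamma>' t) (W t) (W' t) U = 0)))"
  unfolding parallel_along_def koszul_form_def ..

lemma koszul_form_add:
  "koszul_form a Y G W (W\<^sub>1 + W\<^sub>2) U = koszul_form a Y G W W\<^sub>1 U + alpha_metric a Y W\<^sub>2 U"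
  unfolding koszul_form_def alpha_metric_add_left by simp

lemma koszul_form_conj:
  fixes R :: "real^'n^'n" and T :: "real^'k^'k"
  assumes "transpose R ** R = mat 1" and "transpose T ** T = mat 1"
  shows "koszul_form a (R ** Y ** transpose T) (R ** G ** transpose T) (R ** W ** transpose T)
      (R ** W' ** transpose T) (R ** U ** transpose T) = koszul_form a Y G W W' U"
  unfolding koszul_form_def alpha_metric_conj[OF assms] metric_deriv_conj[OF assms] ..

lemma koszul_form_zero_velocity: "koszul_form a Y 0 W 0 U = 0"
  unfolding koszul_form_def alpha_metric_def metric_deriv_eq
  by (simp add: matrix_ring_simps trace_simps)

lemma koszul_form_trace:
  fixes a :: real and X G W W' U :: "real^'k^'n"
  defines "c \<equiv> (2*a+1)/(a+1)"
  shows "koszul_form a X G W W' U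
    = trace (transpose (2 *\<^sub>R W' - c *\<^sub>R (X ** transpose X ** W') - (c/2) *\<^sub>R
       (X ** transpose G ** W + G ** transpose X ** W + X ** transpose W ** G + W ** transpose X ** G
        - G ** transpose W ** X - W ** transpose G ** X)) ** U)"
proof -
  have r1: "trace (transpose G ** (U ** (transpose X ** W))) = trace (transpose X ** (W ** (transpose G ** U)))"
    by (metis trace_mul_sym matrix_mul_assoc)
  have "trace (transpose G ** (X ** (transpose U ** W)))
      = trace (transpose (transpose G ** (X ** (transpose U ** W))))"
    by (simp only: trace_transpose)
  also have "\<dots> = trace (transpose W ** (U ** (transpose X ** G)))"
    by (simp add: matrix_ring_simps)
  also have "\<dots> = trace (transpose X ** (G ** (transpose W ** U)))"
    by (metis trace_mul_sym matrix_mul_assoc)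
  finally have r2: "trace (transpose G ** (X ** (transpose U ** W)))
      = trace (transpose X ** (G ** (transpose W ** U)))" .
  show ?thesis
    unfolding koszul_form_def alpha_metric_def metric_deriv_eq c_def[symmetric]
    by (simp only: matrix_ring_simps trace_simps r1 r2) (simp add: field_simps)
qed

section \<open>The reductive decomposition \<open>gla = hla X \<oplus> pla a X\<close>\<close>

lemma subspace_gla: "subspace gla"
  unfolding subspace_def gla_def by (auto simp: transpose_add transpose_scalar transpose_zero)

lemma pla_subset_gla: "pla a X \<subseteq> gla"
  unfolding pla_def by auto

lemma lie_bracket_in_gla: "\<xi> \<in> gla \<Longrightarrow> \<zeta> \<in> gla \<Longrightarrow> lie_bracket \<xi> \<zeta> \<in> gla"
  unfolding gla_def lie_bracket_def by (auto simp: matrix_ring_simps)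

lemma linear_lie_bracket: "linear (lie_bracket \<xi>)"
  unfolding linear_iff lie_bracket_def by (simp add: matrix_ring_simps algebra_simps)

lemma linear_d_iota_pi: "linear (d_iota_pi X)"
  unfolding linear_iff d_iota_pi_def by (simp add: matrix_ring_simps algebra_simps)

lemma d_iota_pi_in_tangent_st:
  assumes "transpose X ** X = mat 1" and "\<xi> \<in> gla"
  shows "d_iota_pi X \<xi> \<in> tangent_st X"
  using assms unfolding tangent_st_def d_iota_pi_def gla_def
  by (simp add: matrix_ring_simps matrix_left_inverse_cancel[OF assms(1)])

lemma d_iota_pi_at_dL:
  assumes "\<xi> \<in> gla"
  shows "d_iota_pi_at X g (dL g \<xi>) = fst g ** d_iota_pi X \<xi> ** transpose (snd g)"
  using assms unfolding d_iota_pi_at_def dL_def d_iota_pi_def gla_def by (simp add: matrix_ring_simps)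

text \<open>The inverse of \<open>d_iota_pi X\<close> on \<open>pla a X\<close> in closed form, see \<open>d_iota_pi_inv_eq_lift_p\<close>.\<close>

definition lift_p :: "real \<Rightarrow> real^'k^'n \<Rightarrow> real^'k^'n \<Rightarrow> (real^'n^'n) \<times> (real^'k^'k)" where
  "lift_p a X V = (V ** transpose X - X ** transpose V
                     + ((2*a+1)/(a+1)) *\<^sub>R (X ** transpose V ** X ** transpose X),
                   (- a/(a+1)) *\<^sub>R (transpose X ** V))"

lemma linear_lift_p: "linear (lift_p a X)"
  unfolding linear_iff lift_p_def by (simp add: matrix_ring_simps algebra_simps)

lemma lift_p_decomp:
  fixes X K :: "real^'k^'n" and \<Omega> :: "real^'k^'k"
  assumes X: "transpose X ** X = mat 1" and K: "transpose X ** K = 0"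
    and \<Omega>: "transpose \<Omega> = - \<Omega>" and a: "a \<noteq> -1"
  shows "lift_p a X (X ** \<Omega> + K) =
    ((1/(a+1)) *\<^sub>R (X ** \<Omega> ** transpose X) + K ** transpose X - X ** transpose K, (- a/(a+1)) *\<^sub>R \<Omega>)"
proof -
  have KX: "transpose K ** X = 0"
    using K by (rule transpose_mult_eq_0)
  have c: "(2*a+1)/(a+1) = 2 - 1/(a+1)"
    using a by (simp add: field_simps)
  show ?thesis
    unfolding lift_p_def c
    by (simp add: matrix_ring_simps matrix_left_inverse_cancel[OF X] matrix_mult_eq_0_cancel[OF KX]
        X K KX \<Omega> scaleR_diff_left algebra_simps)
      (simp add: scaleR_conv_of_real)
qed

lemma lift_p_in_gla:
  assumes X: "transpose X ** X = mat 1" and V: "V \<in> tangent_st X" and a: "a \<noteq> -1"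
  shows "lift_p a X V \<in> gla"
proof -
  obtain \<Omega> K where V: "V = X ** \<Omega> + K" and K: "transpose X ** K = 0" and \<Omega>: "transpose \<Omega> = - \<Omega>"
    using tangent_st_decomp[OF X V] .
  show ?thesis
    unfolding V lift_p_decomp[OF X K \<Omega> a] gla_def by (simp add: matrix_ring_simps \<Omega>)
qed

lemma d_iota_pi_lift_p:
  assumes X: "transpose X ** X = mat 1" and V: "V \<in> tangent_st X" and a: "a \<noteq> -1"
  shows "d_iota_pi X (lift_p a X V) = V"
proof -
  obtain \<Omega> K where V: "V = X ** \<Omega> + K" and K: "transpose X ** K = 0" and \<Omega>: "transpose \<Omega> = - \<Omega>"
    using tangent_st_decomp[OF X V] .
  have KX: "transpose K ** X = 0"
    using K by (rule transpose_mult_eq_0)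
  have "1/(a+1) + a/(a+1) = 1"
    using a by (simp add: field_simps)
  then have "(1/(a+1)) *\<^sub>R (X ** \<Omega>) + (a/(a+1)) *\<^sub>R (X ** \<Omega>) = X ** \<Omega>"
    by (metis scaleR_add_left scaleR_one)
  then show ?thesis
    unfolding V lift_p_decomp[OF X K \<Omega> a] d_iota_pi_def
    by (simp add: matrix_ring_simps matrix_left_inverse_cancel[OF X] X KX algebra_simps)
qed

lemma lift_p_orthogonal_hla:
  assumes X: "transpose X ** X = mat 1" and V: "V \<in> tangent_st X" and h: "h \<in> hla X"
    and a: "a \<noteq> -1" "a \<noteq> 0"
  shows "ip_alpha a (lift_p a X V) h = 0"
proof -
  obtain \<Omega> K where V: "V = X ** \<Omega> + K" and K: "transpose X ** K = 0" and \<Omega>: "transpose \<Omega> = - \<Omega>"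
    using tangent_st_decomp[OF X V] .
  obtain \<Omega>\<^sub>h \<eta>\<^sub>h where h_eq: "h = (\<Omega>\<^sub>h, \<eta>\<^sub>h)"
    by (cases h)
  have skew: "transpose \<Omega>\<^sub>h = - \<Omega>\<^sub>h" "transpose \<eta>\<^sub>h = - \<eta>\<^sub>h" and hX: "\<Omega>\<^sub>h ** X = X ** \<eta>\<^sub>h"
    using h unfolding h_eq hla_def gla_def by auto
  have Xh: "transpose X ** \<Omega>\<^sub>h = \<eta>\<^sub>h ** transpose X"
    using arg_cong[OF hX, of transpose] skew by (simp add: matrix_transpose_mul matrix_uminus_left matrix_uminus_right)
  have KX: "transpose K ** X = 0"
    using K by (rule transpose_mult_eq_0)
  have "trace (X ** \<Omega> ** transpose X ** \<Omega>\<^sub>h) = trace (\<Omega> ** \<eta>\<^sub>h)"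
    by (metis X Xh matrix_mul_assoc matrix_mul_lid trace_mul_sym)
  moreover have "trace (K ** transpose X ** \<Omega>\<^sub>h) = 0"
    by (metis K Xh matrix_mul_assoc times0_right trace_mul_sym trace_zero)
  moreover have "trace (X ** transpose K ** \<Omega>\<^sub>h) = 0"
    by (metis KX hX matrix_mul_assoc times0_left trace_mul_sym trace_zero)
  ultimately show ?thesis
    unfolding V lift_p_decomp[OF X K \<Omega> a(1)] ip_alpha_def h_eq
    using a by (simp add: matrix_ring_simps trace_simps field_simps)
qed

lemma lift_p_in_pla:
  assumes "transpose X ** X = mat 1" and "V \<in> tangent_st X" and "a \<noteq> -1" "a \<noteq> 0"
  shows "lift_p a X V \<in> pla a X"
  unfolding pla_def using lift_p_in_gla lift_p_orthogonal_hla assms by blast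

lemma ip_alpha_lift_p:
  assumes X: "transpose X ** X = mat 1" and V: "V \<in> tangent_st X" and W: "W \<in> tangent_st X"
    and a: "a \<noteq> -1" "a \<noteq> 0"
  shows "ip_alpha a (lift_p a X V) (lift_p a X W) = alpha_metric a X V W"
proof -
  obtain \<Omega>\<^sub>1 K\<^sub>1 where V: "V = X ** \<Omega>\<^sub>1 + K\<^sub>1" and K\<^sub>1: "transpose X ** K\<^sub>1 = 0"
    and \<Omega>\<^sub>1: "transpose \<Omega>\<^sub>1 = - \<Omega>\<^sub>1"
    using tangent_st_decomp[OF X V] .
  obtain \<Omega>\<^sub>2 K\<^sub>2 where W: "W = X ** \<Omega>\<^sub>2 + K\<^sub>2" and K\<^sub>2: "transpose X ** K\<^sub>2 = 0"
    and \<Omega>\<^sub>2: "transpose \<Omega>\<^sub>2 = - \<Omega>\<^sub>2"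
    using tangent_st_decomp[OF X W] .
  have KX: "transpose K\<^sub>1 ** X = 0" "transpose K\<^sub>2 ** X = 0"
    using K\<^sub>1 K\<^sub>2 by (simp_all add: transpose_mult_eq_0)
  note cancel = matrix_left_inverse_cancel[OF X] matrix_mult_eq_0_cancel[OF K\<^sub>1]
    matrix_mult_eq_0_cancel[OF K\<^sub>2] matrix_mult_eq_0_cancel[OF KX(1)] matrix_mult_eq_0_cancel[OF KX(2)]
  have rot: "trace (X ** M) = trace (M ** X)" "trace (K\<^sub>1 ** N) = trace (N ** K\<^sub>1)"
    "trace (K\<^sub>2 ** N) = trace (N ** K\<^sub>2)" for M N
    by (rule trace_mul_sym)+
  have sym: "trace (\<Omega>\<^sub>2 ** \<Omega>\<^sub>1) = trace (\<Omega>\<^sub>1 ** \<Omega>\<^sub>2)"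
    "trace (transpose K\<^sub>2 ** K\<^sub>1) = trace (transpose K\<^sub>1 ** K\<^sub>2)"
    "trace (K\<^sub>1 ** transpose K\<^sub>2) = trace (transpose K\<^sub>1 ** K\<^sub>2)"
    "trace (K\<^sub>2 ** transpose K\<^sub>1) = trace (transpose K\<^sub>1 ** K\<^sub>2)"
    by (metis trace_mul_sym trace_transpose matrix_transpose_mul transpose_transpose)+
  define m s where "m = 1/(a+1)" and "s = - a/(a+1)"
  have "m * m + s * s / a = m"
  proof -
    have "s * s / a = a/(a+1) * (1/(a+1))"
      using a(2) unfolding s_def by (simp add: power2_eq_square)
    then have "m * m + s * s / a = (1 + a)/(a+1) * (1/(a+1))"
      unfolding m_def by (simp add: add_divide_distrib ring_distribs)
    then show ?thesis
      using a(1) unfolding m_def by (simp add: add.commute)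
  qed
  moreover have "ip_alpha a (lift_p a X V) (lift_p a X W)
      = 2 * trace (transpose K\<^sub>1 ** K\<^sub>2) - (m * m + s * s / a) * trace (\<Omega>\<^sub>1 ** \<Omega>\<^sub>2)"
    unfolding V W lift_p_decomp[OF X K\<^sub>1 \<Omega>\<^sub>1 a(1)] lift_p_decomp[OF X K\<^sub>2 \<Omega>\<^sub>2 a(1)]
      ip_alpha_def m_def[symmetric] s_def[symmetric]
    apply (simp only: fst_conv snd_conv matrix_ring_simps cancel X K\<^sub>1 K\<^sub>2 KX trace_simps
        matrix_mul_lid matrix_mul_rid)
    apply (simp only: rot matrix_ring_simps cancel X K\<^sub>1 K\<^sub>2 KX matrix_mul_lid matrix_mul_rid trace_zero)
    apply (simp only: sym)
    using a(2) apply (simp add: field_simps)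
    done
  moreover have "alpha_metric a X V W = 2 * trace (transpose K\<^sub>1 ** K\<^sub>2) - m * trace (\<Omega>\<^sub>1 ** \<Omega>\<^sub>2)"
    unfolding V W alpha_metric_def m_def
    apply (simp only: matrix_ring_simps cancel X K\<^sub>1 K\<^sub>2 KX \<Omega>\<^sub>1 trace_simps matrix_mul_lid matrix_mul_rid)
    using a apply (simp add: field_simps)
    done
  ultimately show ?thesis
    by simp
qed

lemma pla_snd_eq:
  assumes X: "transpose X ** X = mat 1" and \<xi>: "(\<Omega>, \<eta>) \<in> pla a X" and a: "a \<noteq> 0"
  shows "\<eta> = - a *\<^sub>R (transpose X ** \<Omega> ** X)"
proof -
  have skew: "transpose \<Omega> = - \<Omega>" "transpose \<eta> = - \<eta>"
    using \<xi> unfolding pla_def gla_def by auto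
  define M where "M = \<eta> + a *\<^sub>R (transpose X ** \<Omega> ** X)"
  have M: "transpose M = - M"
    unfolding M_def by (simp add: matrix_ring_simps skew algebra_simps)
  have "(X ** M ** transpose X, M) \<in> hla X"
    unfolding hla_def gla_def by (simp add: matrix_ring_simps M matrix_left_inverse_cancel[OF X] X)
  then have "ip_alpha a (\<Omega>, \<eta>) (X ** M ** transpose X, M) = 0"
    using \<xi> unfolding pla_def by blast
  moreover have "trace (\<Omega> ** (X ** M ** transpose X)) = trace (transpose X ** \<Omega> ** X ** M)"
    by (metis matrix_mul_assoc trace_mul_sym)
  ultimately have "a * trace (transpose X ** \<Omega> ** X ** M) + trace (\<eta> ** M) = 0"
    using a unfolding ip_alpha_def by (simp add: field_simps)
  then have "trace (M ** M) = 0"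
    unfolding M_def by (simp add: matrix_add_rdistrib matrix_scaleR_left trace_add trace_scaleR algebra_simps)
  then have "M = 0"
    using skew_eq_0_if_trace_square_eq_0 M by blast
  then show ?thesis
    unfolding M_def by (simp add: eq_neg_iff_add_eq_0)
qed

lemma pla_fst_normal_block:
  assumes X: "transpose X ** X = mat 1" and \<xi>: "(\<Omega>, \<eta>) \<in> pla a X"
  shows "(mat 1 - X ** transpose X) ** \<Omega> ** (mat 1 - X ** transpose X) = 0"
proof -
  have skew: "transpose \<Omega> = - \<Omega>"
    using \<xi> unfolding pla_def gla_def by auto
  define P where "P = mat 1 - X ** transpose X"
  have P: "P ** P = P" "transpose P = P" "P ** X = 0"
    unfolding P_def by (simp_all add: matrix_ring_simps X matrix_left_inverse_cancel[OF X])
  define C where "C = P ** \<Omega> ** P"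
  have C: "transpose C = - C"
    unfolding C_def by (simp add: matrix_ring_simps P skew)
  have "(C, 0) \<in> hla X"
    unfolding hla_def gla_def using C by (simp add: C_def matrix_ring_simps P)
  then have "ip_alpha a (\<Omega>, \<eta>) (C, 0) = 0"
    using \<xi> unfolding pla_def by blast
  then have "trace (\<Omega> ** C) = 0"
    unfolding ip_alpha_def by (simp add: trace_zero)
  moreover have "trace (C ** C) = trace (\<Omega> ** C)"
  proof -
    have "trace (C ** C) = trace (P ** (\<Omega> ** P ** \<Omega> ** P))"
      unfolding C_def by (metis P(1) matrix_mul_assoc)
    also have "\<dots> = trace ((\<Omega> ** P ** \<Omega> ** P) ** P)"
      by (rule trace_mul_sym)
    finally show ?thesis
      unfolding C_def by (metis P(1) matrix_mul_assoc)
  qed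
  ultimately have "C = 0"
    using skew_eq_0_if_trace_square_eq_0 C by simp
  then show ?thesis
    unfolding C_def P_def .
qed

lemma lift_p_d_iota_pi:
  assumes X: "transpose X ** X = mat 1" and \<xi>: "\<xi> \<in> pla a X" and a: "a \<noteq> -1" "a \<noteq> 0"
  shows "lift_p a X (d_iota_pi X \<xi>) = \<xi>"
proof -
  obtain \<Omega> \<eta> where \<xi>_eq: "\<xi> = (\<Omega>, \<eta>)"
    by (cases \<xi>)
  have skew: "transpose \<Omega> = - \<Omega>"
    using \<xi> unfolding \<xi>_eq pla_def gla_def by auto
  have \<eta>: "\<eta> = - a *\<^sub>R (transpose X ** \<Omega> ** X)"
    using pla_snd_eq[OF X \<xi>[unfolded \<xi>_eq] a(2)] .
  have \<Omega>: "\<Omega> = X ** transpose X ** \<Omega> + \<Omega> ** X ** transpose X - X ** transpose X ** \<Omega> ** X ** transpose X"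
    using pla_fst_normal_block[OF X \<xi>[unfolded \<xi>_eq]]
    by (simp add: matrix_ring_simps matrix_left_inverse_cancel[OF X] algebra_simps)
  define \<Omega>' K where "\<Omega>' = (a + 1) *\<^sub>R (transpose X ** \<Omega> ** X)"
    and "K = \<Omega> ** X - X ** (transpose X ** \<Omega> ** X)"
  have K: "transpose X ** K = 0"
    unfolding K_def by (simp add: matrix_ring_simps matrix_left_inverse_cancel[OF X])
  have \<Omega>': "transpose \<Omega>' = - \<Omega>'"
    unfolding \<Omega>'_def by (simp add: matrix_ring_simps skew)
  have d: "d_iota_pi X \<xi> = X ** \<Omega>' + K"
    unfolding d_iota_pi_def \<xi>_eq \<Omega>'_def K_def \<eta>
    by (simp add: matrix_ring_simps scaleR_add_left algebra_simps)
  have a1: "a + 1 \<noteq> 0"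
    using a(1) by simp
  have "lift_p a X (d_iota_pi X \<xi>) =
      ((1/(a+1)) *\<^sub>R (X ** \<Omega>' ** transpose X) + K ** transpose X - X ** transpose K, (- a/(a+1)) *\<^sub>R \<Omega>')"
    unfolding d by (rule lift_p_decomp[OF X K \<Omega>' a(1)])
  also have "\<dots> = (X ** transpose X ** \<Omega> + \<Omega> ** X ** transpose X
      - X ** transpose X ** \<Omega> ** X ** transpose X, \<eta>)"
    unfolding \<Omega>'_def K_def \<eta> using a1 by (simp add: matrix_ring_simps skew)
  finally show ?thesis
    unfolding \<xi>_eq by (simp flip: \<Omega>)
qed

lemma d_iota_pi_inv_eq_lift_p:
  assumes X: "transpose X ** X = mat 1" and V: "V \<in> tangent_st X" and a: "a \<noteq> -1" "a \<noteq> 0"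
  shows "d_iota_pi_inv a X V = lift_p a X V"
  unfolding d_iota_pi_inv_def
proof (rule the_equality)
  show "lift_p a X V \<in> pla a X \<and> d_iota_pi X (lift_p a X V) = V"
    using lift_p_in_pla[OF X V a] d_iota_pi_lift_p[OF X V a(1)] by blast
  show "\<xi> = lift_p a X V" if "\<xi> \<in> pla a X \<and> d_iota_pi X \<xi> = V" for \<xi>
    using lift_p_d_iota_pi[OF X _ a, of \<xi>] that by auto
qed

lemma pr_p_eq_lift_p:
  assumes X: "transpose X ** X = mat 1" and \<xi>: "\<xi> \<in> gla" and a: "a \<noteq> -1" "a \<noteq> 0"
  shows "pr_p a X \<xi> = lift_p a X (d_iota_pi X \<xi>)"
  unfolding pr_p_def
proof (rule the_equality)
  have ker: "\<zeta> \<in> hla X \<longleftrightarrow> d_iota_pi X \<zeta> = 0" if "\<zeta> \<in> gla" for \<zeta>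
    using that unfolding hla_def d_iota_pi_def by (cases \<zeta>) simp
  have diff: "\<xi> - p \<in> gla" if "p \<in> pla a X" for p
    using subspace_diff[OF subspace_gla \<xi>] that pla_subset_gla by blast
  have T: "d_iota_pi X \<xi> \<in> tangent_st X"
    using d_iota_pi_in_tangent_st[OF X \<xi>] .
  have p: "lift_p a X (d_iota_pi X \<xi>) \<in> pla a X"
    using lift_p_in_pla[OF X T a] .
  moreover have "d_iota_pi X (\<xi> - lift_p a X (d_iota_pi X \<xi>)) = 0"
    by (simp add: linear_diff[OF linear_d_iota_pi] d_iota_pi_lift_p[OF X T a(1)])
  ultimately show "lift_p a X (d_iota_pi X \<xi>) \<in> pla a X \<and> \<xi> - lift_p a X (d_iota_pi X \<xi>) \<in> hla X"
    using ker diff by blast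
  show "p = lift_p a X (d_iota_pi X \<xi>)" if "p \<in> pla a X \<and> \<xi> - p \<in> hla X" for p
  proof -
    have "d_iota_pi X (\<xi> - p) = 0"
      using that ker diff by blast
    then have "d_iota_pi X p = d_iota_pi X \<xi>"
      by (simp add: linear_diff[OF linear_d_iota_pi])
    then show ?thesis
      using lift_p_d_iota_pi[OF X _ a, of p] that by simp
  qed
qed

lemma d_iota_pi_pr_p:
  assumes "transpose X ** X = mat 1" and "\<xi> \<in> gla" and "a \<noteq> -1" "a \<noteq> 0"
  shows "d_iota_pi X (pr_p a X \<xi>) = d_iota_pi X \<xi>"
  using assms by (simp add: pr_p_eq_lift_p d_iota_pi_lift_p d_iota_pi_in_tangent_st)

lemma alpha_metric_d_iota_pi:
  assumes X: "transpose X ** X = mat 1" and a: "a \<noteq> -1" "a \<noteq> 0"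
    and \<xi>: "\<xi> \<in> pla a X" and \<zeta>: "\<zeta> \<in> pla a X"
  shows "alpha_metric a X (d_iota_pi X \<xi>) (d_iota_pi X \<zeta>) = ip_alpha a \<xi> \<zeta>"
  using ip_alpha_lift_p[OF X d_iota_pi_in_tangent_st[OF X] d_iota_pi_in_tangent_st[OF X] a]
    \<xi> \<zeta> pla_subset_gla lift_p_d_iota_pi[OF X _ a] by (metis subsetD)

lemma bij_betw_lift_p:
  assumes X: "transpose X ** X = mat 1" and a: "a \<noteq> -1" "a \<noteq> 0"
  shows "bij_betw (lift_p a X) (tangent_st X) (pla a X)"
    and "bij_betw (d_iota_pi X) (pla a X) (tangent_st X)"
proof -
  have "\<forall>V\<in>tangent_st X. d_iota_pi X (lift_p a X V) = V"
    and "\<forall>\<xi>\<in>pla a X. lift_p a X (d_iota_pi X \<xi>) = \<xi>"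
    and "lift_p a X ` tangent_st X \<subseteq> pla a X"
    and "d_iota_pi X ` pla a X \<subseteq> tangent_st X"
    using d_iota_pi_lift_p[OF X _ a(1)] lift_p_d_iota_pi[OF X _ a] lift_p_in_pla[OF X _ a]
      d_iota_pi_in_tangent_st[OF X] pla_subset_gla by blast+
  then show "bij_betw (lift_p a X) (tangent_st X) (pla a X)"
    and "bij_betw (d_iota_pi X) (pla a X) (tangent_st X)"
    by (auto intro!: bij_betw_byWitness)
qed

lemma koszul_form_lift_p:
  fixes X V W U :: "real^'k^'n"
  assumes X: "transpose X ** X = mat 1" and a: "a \<noteq> -1"
    and V: "V \<in> tangent_st X" and W: "W \<in> tangent_st X" and U: "U \<in> tangent_st X"
  defines "Q \<equiv> fst (lift_p a X V) ** W - W ** snd (lift_p a X V)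
                 - (1/2) *\<^sub>R d_iota_pi X (lie_bracket (lift_p a X V) (lift_p a X W))"
  shows "koszul_form a X V W Q U = 0"
proof -
  define c where "c = (2*a+1)/(a+1)"
  have lift: "lift_p a X Z = (Z ** transpose X - X ** transpose Z + c *\<^sub>R (X ** transpose Z ** X ** transpose X),
      (1 - c) *\<^sub>R (transpose X ** Z))" for Z
    unfolding lift_p_def c_def using a by (simp add: field_simps)
  have XV: "transpose V ** X = - (transpose X ** V)" and XW: "transpose W ** X = - (transpose X ** W)"
    using V W by (simp_all add: tangent_st_iff)
  have XV2: "transpose V ** (X ** M) = - (transpose X ** (V ** M))"
    and XW2: "transpose W ** (X ** M) = - (transpose X ** (W ** M))" for M :: "real^'c^'k"
    by (simp_all add: matrix_mul_assoc XV XW matrix_uminus_left)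
  \<comment> \<open>the gradient of the Koszul form at \<open>X\<close> is \<open>X S\<close> with \<open>S\<close> symmetric, hence normal to \<open>tangent_st X\<close>\<close>
  define S where "S = - (transpose V ** W + transpose W ** V)
      - c *\<^sub>R (transpose X ** V ** transpose X ** W + transpose X ** W ** transpose X ** V)"
  have gradient: "2 *\<^sub>R Q - c *\<^sub>R (X ** transpose X ** Q) - (c/2) *\<^sub>R
       (X ** transpose V ** W + V ** transpose X ** W + X ** transpose W ** V + W ** transpose X ** V
        - V ** transpose W ** X - W ** transpose V ** X) = X ** S"
    unfolding Q_def S_def lift lie_bracket_def d_iota_pi_def fst_conv snd_conv
    apply (simp only: matrix_ring_simps X matrix_left_inverse_cancel[OF X] XV XV2 XW XW2
        matrix_mul_lid matrix_mul_rid)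
    apply (simp add: vec_eq_iff)
    apply (simp add: field_simps)
    done
  have "transpose S = S"
    unfolding S_def by (simp add: matrix_ring_simps XV XW algebra_simps)
  moreover have "transpose (transpose X ** U) = - (transpose X ** U)"
    using U by (simp add: tangent_st_iff matrix_transpose_mul)
  ultimately have "trace (S ** (transpose X ** U)) = 0"
    by (rule trace_symmetric_mult_skew)
  then show ?thesis
    unfolding koszul_form_trace c_def[symmetric] gradient
    by (simp add: matrix_transpose_mul \<open>transpose S = S\<close> matrix_mul_assoc)
qed

section \<open>Rolling along the solutions of the kinematic equations\<close>

lemma O_p_lincomb:
  "T \<in> O_p a X \<Longrightarrow> \<xi> \<in> pla a X \<Longrightarrow> \<zeta> \<in> pla a X \<Longrightarrow> T (c *\<^sub>R \<xi> + d *\<^sub>R \<zeta>) = c *\<^sub>R T \<xi> + d *\<^sub>R T \<zeta>"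
  unfolding O_p_def by blast

lemma O_p_in_pla: "T \<in> O_p a X \<Longrightarrow> \<xi> \<in> pla a X \<Longrightarrow> T \<xi> \<in> pla a X"
  unfolding O_p_def bij_betw_def by blast

lemma linear_O_p_comp:
  assumes T: "T \<in> O_p a X" and f: "linear f" and range: "\<And>x. f x \<in> pla a X"
  shows "linear (\<lambda>x. T (f x))"
proof (rule linearI)
  show "T (f (x + y)) = T (f x) + T (f y)" for x y
    using O_p_lincomb[OF T range range, of 1 x 1 y] by (simp add: linear_add[OF f])
  show "T (f (c *\<^sub>R x)) = c *\<^sub>R T (f x)" for c x
    using O_p_lincomb[OF T range range, of c x 0 x] by (simp add: linear_scale[OF f])
qed

definition tangent_proj :: "real^'k^'n \<Rightarrow> real^'k^'n \<Rightarrow> real^'k^'n" where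
  "tangent_proj X V = V - (1/2) *\<^sub>R (X ** (transpose X ** V + transpose V ** X))"

lemma linear_tangent_proj: "linear (tangent_proj X)"
  unfolding linear_iff tangent_proj_def by (simp add: matrix_ring_simps algebra_simps)

lemma tangent_proj_in_tangent_st:
  assumes X: "transpose X ** X = mat 1"
  shows "tangent_proj X V \<in> tangent_st X"
  unfolding tangent_proj_def tangent_st_def
  by (simp add: matrix_ring_simps matrix_left_inverse_cancel[OF X] X) (simp add: algebra_simps)

lemma tangent_proj_id: "V \<in> tangent_st X \<Longrightarrow> tangent_proj X V = V"
  unfolding tangent_proj_def tangent_st_def by simp

lemma has_vector_derivative_at_bot: "at t within I = bot \<Longrightarrow> (f has_vector_derivative v) (at t within I)"
  by (simp add: has_vector_derivative_def has_derivative_bot bounded_linear_scaleR_left)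

lemma has_vector_derivative_in_tangent_st:
  fixes X :: "real^'k^'n"
  assumes Z: "\<forall>s\<in>I. Z s \<in> tangent_st X" and t: "t \<in> I" and nontrivial: "at t within I \<noteq> bot"
    and Z': "(Z has_vector_derivative Zd) (at t within I)"
  shows "Zd \<in> tangent_st X"
proof -
  define \<phi> where "\<phi> V = transpose X ** V + transpose V ** X" for V :: "real^'k^'n"
  have "bounded_linear \<phi>"
    unfolding \<phi>_def linear_conv_bounded_linear[symmetric] linear_iff
    by (simp add: matrix_ring_simps algebra_simps)
  then have "((\<lambda>s. \<phi> (Z s)) has_vector_derivative \<phi> Zd) (at t within I)"
    using Z' by (rule bounded_linear.has_vector_derivative)
  moreover have "((\<lambda>s. \<phi> (Z s)) has_vector_derivative 0) (at t within I)"
    by (rule has_vector_derivative_transform[OF t _ has_vector_derivative_const])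
      (use Z in \<open>auto simp: \<phi>_def tangent_st_def\<close>)
  ultimately have "\<phi> Zd = 0"
    using nontrivial vector_derivative_unique_within by blast
  then show ?thesis
    unfolding \<phi>_def tangent_st_def by simp
qed

lemma has_vector_derivative_linear_family:
  fixes F :: "real \<Rightarrow> 'a::euclidean_space \<Rightarrow> 'b::real_normed_vector"
  assumes t: "t \<in> I" and lin: "\<And>s. s \<in> I \<Longrightarrow> linear (F s)"
    and F': "\<And>b. b \<in> Basis \<Longrightarrow> ((\<lambda>s. F s b) has_vector_derivative F' b) (at t within I)"
    and Z': "(Z has_vector_derivative Zd) (at t within I)"
  shows "((\<lambda>s. F s (Z s)) has_vector_derivative F t Zd + (\<Sum>b\<in>Basis. (Z t \<bullet> b) *\<^sub>R F' b))
    (at t within I)"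
proof -
  have expand: "F s z = (\<Sum>b\<in>Basis. (z \<bullet> b) *\<^sub>R F s b)" if "s \<in> I" for s z
    using linear_sum[OF lin[OF that]] linear_scale[OF lin[OF that]]
    by (metis (no_types, lifting) euclidean_representation sum.cong)
  have "((\<lambda>s. \<Sum>b\<in>Basis. (Z s \<bullet> b) *\<^sub>R F s b) has_vector_derivative
      (\<Sum>b\<in>Basis. (Z t \<bullet> b) *\<^sub>R F' b + (Zd \<bullet> b) *\<^sub>R F t b)) (at t within I)"
  proof (rule has_vector_derivative_sum)
    fix b :: 'a assume "b \<in> Basis"
    have "((\<lambda>s. Z s \<bullet> b) has_vector_derivative Zd \<bullet> b) (at t within I)"
      using bounded_linear.has_vector_derivative[OF bounded_linear_inner_left Z'] .
    then show "((\<lambda>s. (Z s \<bullet> b) *\<^sub>R F s b) has_vector_derivative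
        (Z t \<bullet> b) *\<^sub>R F' b + (Zd \<bullet> b) *\<^sub>R F t b) (at t within I)"
      using bounded_bilinear.has_vector_derivative[OF bounded_bilinear_scaleR _ F'[OF \<open>b \<in> Basis\<close>]]
      by blast
  qed
  then have "((\<lambda>s. F s (Z s)) has_vector_derivative
      (\<Sum>b\<in>Basis. (Z t \<bullet> b) *\<^sub>R F' b + (Zd \<bullet> b) *\<^sub>R F t b)) (at t within I)"
    by (rule has_vector_derivative_transform[OF t, rotated]) (simp add: expand)
  then show ?thesis
    by (rule has_vector_derivative_eq_rhs) (simp add: expand[OF t, of Zd] sum.distrib)
qed

lemma lin_isometry_st_transport:
  fixes R :: "real^'n^'n" and \<theta> :: "real^'k^'k" and X :: "real^'k^'n"
  assumes X: "transpose X ** X = mat 1" and a: "a \<noteq> -1" "a \<noteq> 0"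
    and R: "orthogonal_matrix R" and \<theta>: "orthogonal_matrix \<theta>" and T: "T \<in> O_p a X"
    and B: "\<And>V. V \<in> tangent_st X \<Longrightarrow> B V = R ** d_iota_pi X (T (lift_p a X V)) ** transpose \<theta>"
  shows "lin_isometry_st a X (R ** X ** transpose \<theta>) B"
  unfolding lin_isometry_st_def
proof (intro conjI ballI allI)
  have R1: "transpose R ** R = mat 1" and \<theta>1: "transpose \<theta> ** \<theta> = mat 1"
    using R \<theta> by (auto simp: orthogonal_matrix_def)
  fix V W assume V: "V \<in> tangent_st X" and W: "W \<in> tangent_st X"
  have p: "lift_p a X V \<in> pla a X" "lift_p a X W \<in> pla a X"
    using lift_p_in_pla[OF X V a] lift_p_in_pla[OF X W a] by auto
  show "B (c *\<^sub>R V + d *\<^sub>R W) = c *\<^sub>R B V + d *\<^sub>R B W" for c d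
  proof -
    have "T (lift_p a X (c *\<^sub>R V + d *\<^sub>R W)) = c *\<^sub>R T (lift_p a X V) + d *\<^sub>R T (lift_p a X W)"
      using O_p_lincomb[OF T p] by (simp add: linear_add[OF linear_lift_p] linear_scale[OF linear_lift_p])
    then show ?thesis
      using B tangent_st_lincomb[OF V W] V W
      by (simp add: linear_add[OF linear_d_iota_pi] linear_scale[OF linear_d_iota_pi] matrix_ring_simps)
  qed
  have "alpha_metric a (R ** X ** transpose \<theta>) (B V) (B W)
      = alpha_metric a X (d_iota_pi X (T (lift_p a X V))) (d_iota_pi X (T (lift_p a X W)))"
    using B V W alpha_metric_conj[OF R1 \<theta>1] by simp
  also have "\<dots> = ip_alpha a (T (lift_p a X V)) (T (lift_p a X W))"
    using alpha_metric_d_iota_pi[OF X a] O_p_in_pla[OF T] p by blast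
  also have "\<dots> = ip_alpha a (lift_p a X V) (lift_p a X W)"
    using T p unfolding O_p_def by blast
  also have "\<dots> = alpha_metric a X V W"
    using ip_alpha_lift_p[OF X V W a] .
  finally show "alpha_metric a (R ** X ** transpose \<theta>) (B V) (B W) = alpha_metric a X V W" .
next
  have "bij_betw T (pla a X) (pla a X)"
    using T unfolding O_p_def by blast
  then have "bij_betw ((\<lambda>U. R ** U ** transpose \<theta>) \<circ> d_iota_pi X \<circ> T \<circ> lift_p a X)
      (tangent_st X) (tangent_st (R ** X ** transpose \<theta>))"
    using bij_betw_lift_p[OF X a] bij_betw_conj_tangent_st[OF R \<theta>]
    by (blast intro: bij_betw_trans)
  then show "bij_betw B (tangent_st X) (tangent_st (R ** X ** transpose \<theta>))"
    by (rule bij_betw_cong[THEN iffD1, rotated]) (simp add: B)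
qed

lemma has_vector_derivative_iota_pi:
  fixes R :: "real \<Rightarrow> real^'n^'n" and \<theta> :: "real \<Rightarrow> real^'k^'k" and X :: "real^'k^'n"
  assumes "((\<lambda>s. (R s, \<theta> s)) has_vector_derivative v) (at t within I)"
  shows "((\<lambda>s. iota_pi X (R s, \<theta> s)) has_vector_derivative d_iota_pi_at X (R t, \<theta> t) v) (at t within I)"
proof -
  note mult = bounded_bilinear_matrix_mult
  have R': "(R has_vector_derivative fst v) (at t within I)"
    and \<theta>': "(\<theta> has_vector_derivative snd v) (at t within I)"
    using bounded_linear.has_vector_derivative[OF bounded_linear_fst assms]
      bounded_linear.has_vector_derivative[OF bounded_linear_snd assms] by simp_all
  have "((\<lambda>s. R s ** X) has_vector_derivative fst v ** X) (at t within I)"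
    using bounded_linear.has_vector_derivative[OF bounded_bilinear.bounded_linear_left[OF mult] R'] .
  moreover have "((\<lambda>s. transpose (\<theta> s)) has_vector_derivative transpose (snd v)) (at t within I)"
    using bounded_linear.has_vector_derivative[OF bounded_linear_transpose \<theta>'] .
  ultimately have "((\<lambda>s. R s ** X ** transpose (\<theta> s)) has_vector_derivative
      R t ** X ** transpose (snd v) + fst v ** X ** transpose (\<theta> t)) (at t within I)"
    by (rule bounded_bilinear.has_vector_derivative[OF mult])
  then show ?thesis
    unfolding iota_pi_def d_iota_pi_at_def fst_conv snd_conv by (simp add: add.commute)
qed

lemma linear_O_p_lift_p_tangent_proj:
  assumes X: "transpose X ** X = mat 1" and a: "a \<noteq> -1" "a \<noteq> 0" and T: "T \<in> O_p a X"
  shows "linear (\<lambda>V. T (lift_p a X (tangent_proj X V)))"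
proof (rule linear_O_p_comp[OF T])
  show "linear (\<lambda>V. lift_p a X (tangent_proj X V))"
    using linear_compose[OF linear_tangent_proj linear_lift_p] by (simp add: o_def)
  show "lift_p a X (tangent_proj X V) \<in> pla a X" for V
    using lift_p_in_pla[OF X tangent_proj_in_tangent_st[OF X] a] .
qed

lemma has_vector_derivative_O_p_lift_p:
  fixes X :: "real^'k^'n"
  assumes X: "transpose X ** X = mat 1" and a: "a \<noteq> -1" "a \<noteq> 0" and t: "t \<in> I"
    and S: "\<forall>s\<in>I. S s \<in> O_p a X"
    and S': "\<forall>\<xi>\<in>pla a X. ((\<lambda>s. S s \<xi>) has_vector_derivative
               (- (1/2)) *\<^sub>R pr_p a X (lie_bracket w (S t \<xi>))) (at t within I)"
    and w: "w \<in> pla a X"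
    and Z: "\<forall>s\<in>I. Z s \<in> tangent_st X" and Z': "(Z has_vector_derivative Zd) (at t within I)"
    and Zd: "Zd \<in> tangent_st X"
  shows "((\<lambda>s. d_iota_pi X (S s (lift_p a X (Z s)))) has_vector_derivative
      d_iota_pi X (S t (lift_p a X Zd)) - (1/2) *\<^sub>R d_iota_pi X (lie_bracket w (S t (lift_p a X (Z t)))))
    (at t within I)"
proof -
  \<comment> \<open>\<open>S s\<close> is only known on \<open>pla a X\<close>; precomposing with \<open>tangent_proj\<close> makes it linear everywhere\<close>
  define P where "P V = lift_p a X (tangent_proj X V)" for V
  define F where "F s V = d_iota_pi X (S s (P V))" for s V
  define G where "G V = - (1/2) *\<^sub>R d_iota_pi X (lie_bracket w (S t (P V)))" for V
  have P: "P V \<in> pla a X" for V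
    unfolding P_def using lift_p_in_pla[OF X tangent_proj_in_tangent_st[OF X] a] .
  have P_id: "P V = lift_p a X V" if "V \<in> tangent_st X" for V
    unfolding P_def tangent_proj_id[OF that] ..
  note linSP = linear_O_p_lift_p_tangent_proj[OF X a S[rule_format], folded P_def]
  have linF: "linear (F s)" if "s \<in> I" for s
    unfolding F_def using linear_compose[OF linSP[OF that] linear_d_iota_pi] by (simp add: o_def)
  have linG: "linear G"
    unfolding G_def using linear_compose[OF linear_compose[OF linSP[OF t] linear_lie_bracket] linear_d_iota_pi]
    by (intro linear_compose_scale_right) (simp add: o_def)
  have F': "((\<lambda>s. F s b) has_vector_derivative G b) (at t within I)" for b
  proof -
    have "lie_bracket w (S t (P b)) \<in> gla"
      using lie_bracket_in_gla O_p_in_pla[OF S[rule_format, OF t] P] w pla_subset_gla by blast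
    then show ?thesis
      using bounded_linear.has_vector_derivative[OF linear_d_iota_pi[of X, THEN linear_conv_bounded_linear[THEN iffD1]]
          S'[rule_format, OF P[of b]]]
      unfolding F_def G_def
      by (simp add: linear_neg[OF linear_d_iota_pi] linear_scale[OF linear_d_iota_pi] d_iota_pi_pr_p[OF X _ a])
  qed
  have "(\<Sum>b\<in>Basis. (Z t \<bullet> b) *\<^sub>R G b) = G (Z t)"
    using linear_sum[OF linG] linear_scale[OF linG] euclidean_representation[of "Z t"]
    by (metis (no_types, lifting) sum.cong)
  then have dFZ: "((\<lambda>s. F s (Z s)) has_vector_derivative F t Zd + G (Z t)) (at t within I)"
    using has_vector_derivative_linear_family[OF t linF F' Z'] by simp
  have FZ: "d_iota_pi X (S s (lift_p a X (Z s))) = F s (Z s)" if "s \<in> I" for s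
    using Z that unfolding F_def by (simp add: P_id)
  have "F t Zd + G (Z t)
      = d_iota_pi X (S t (lift_p a X Zd)) - (1/2) *\<^sub>R d_iota_pi X (lie_bracket w (S t (lift_p a X (Z t))))"
    using Z t unfolding F_def G_def by (simp add: P_id[OF Zd] P_id)
  with has_vector_derivative_transform[OF t FZ dFZ] show ?thesis
    by simp
qed

lemma has_vector_derivative_transported:
  fixes R :: "real \<Rightarrow> real^'n^'n" and \<theta> :: "real \<Rightarrow> real^'k^'k" and X :: "real^'k^'n"
  assumes X: "transpose X ** X = mat 1" and a: "a \<noteq> -1" "a \<noteq> 0" and t: "t \<in> I"
    and S: "\<forall>s\<in>I. S s \<in> O_p a X"
    and S': "\<forall>\<xi>\<in>pla a X. ((\<lambda>s. S s \<xi>) has_vector_derivative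
               (- (1/2)) *\<^sub>R pr_p a X (lie_bracket w (S t \<xi>))) (at t within I)"
    and R\<theta>': "((\<lambda>s. (R s, \<theta> s)) has_vector_derivative dL (R t, \<theta> t) w) (at t within I)"
    and w: "w \<in> pla a X"
    and Z: "\<forall>s\<in>I. Z s \<in> tangent_st X" and Z': "(Z has_vector_derivative Zd) (at t within I)"
    and Zd: "Zd \<in> tangent_st X"
  defines "\<nu> \<equiv> S t (lift_p a X (Z t))"
  shows "((\<lambda>s. R s ** d_iota_pi X (S s (lift_p a X (Z s))) ** transpose (\<theta> s)) has_vector_derivative
    R t ** (fst w ** d_iota_pi X \<nu> - d_iota_pi X \<nu> ** snd w - (1/2) *\<^sub>R d_iota_pi X (lie_bracket w \<nu>)
            + d_iota_pi X (S t (lift_p a X Zd))) ** transpose (\<theta> t)) (at t within I)"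
proof -
  note mult = bounded_bilinear_matrix_mult
  note dF = has_vector_derivative_O_p_lift_p[OF X a t S S' w Z Z' Zd, folded \<nu>_def]
  have R': "(R has_vector_derivative R t ** fst w) (at t within I)"
    and \<theta>': "(\<theta> has_vector_derivative \<theta> t ** snd w) (at t within I)"
    using bounded_linear.has_vector_derivative[OF bounded_linear_fst R\<theta>']
      bounded_linear.has_vector_derivative[OF bounded_linear_snd R\<theta>'] by (simp_all add: dL_def)
  have "((\<lambda>s. transpose (\<theta> s)) has_vector_derivative transpose (\<theta> t ** snd w)) (at t within I)"
    using bounded_linear.has_vector_derivative[OF bounded_linear_transpose \<theta>'] .
  with bounded_bilinear.has_vector_derivative[OF mult R' dF]
  have "((\<lambda>s. R s ** d_iota_pi X (S s (lift_p a X (Z s))) ** transpose (\<theta> s)) has_vector_derivative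
      R t ** d_iota_pi X \<nu> ** transpose (\<theta> t ** snd w)
      + (R t ** (d_iota_pi X (S t (lift_p a X Zd)) - (1/2) *\<^sub>R d_iota_pi X (lie_bracket w \<nu>))
         + R t ** fst w ** d_iota_pi X \<nu>) ** transpose (\<theta> t)) (at t within I)"
    unfolding \<nu>_def by (rule bounded_bilinear.has_vector_derivative[OF mult])
  moreover have "transpose (snd w) = - snd w"
    using w pla_subset_gla unfolding gla_def by auto
  ultimately show ?thesis
    by (simp add: matrix_ring_simps algebra_simps)
qed

lemma koszul_form_transported:
  fixes R :: "real^'n^'n" and \<theta> :: "real^'k^'k" and X U D :: "real^'k^'n"
  assumes X: "transpose X ** X = mat 1" and a: "a \<noteq> -1" "a \<noteq> 0"
    and R: "orthogonal_matrix R" and \<theta>: "orthogonal_matrix \<theta>"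
    and w: "w \<in> pla a X" and \<nu>: "\<nu> \<in> pla a X"
    and U: "U \<in> tangent_st (R ** X ** transpose \<theta>)"
  shows "koszul_form a (R ** X ** transpose \<theta>) (R ** d_iota_pi X w ** transpose \<theta>)
      (R ** d_iota_pi X \<nu> ** transpose \<theta>)
      (R ** (fst w ** d_iota_pi X \<nu> - d_iota_pi X \<nu> ** snd w - (1/2) *\<^sub>R d_iota_pi X (lie_bracket w \<nu>)
             + D) ** transpose \<theta>) U
    = alpha_metric a (R ** X ** transpose \<theta>) (R ** D ** transpose \<theta>) U"
proof -
  have R1: "transpose R ** R = mat 1" "R ** transpose R = mat 1"
    and \<theta>1: "transpose \<theta> ** \<theta> = mat 1" "\<theta> ** transpose \<theta> = mat 1"
    using R \<theta> by (auto simp: orthogonal_matrix_def)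
  define U' where "U' = transpose R ** U ** \<theta>"
  have U_eq: "U = R ** U' ** transpose \<theta>"
    unfolding U'_def
    by (simp add: matrix_ring_simps matrix_left_inverse_cancel[OF R1(2)] matrix_left_inverse_cancel[OF \<theta>1(2)] R1 \<theta>1)
  have U': "U' \<in> tangent_st X"
    using U unfolding U_eq tangent_st_conj_iff[OF R1(1) \<theta>1(1)] .
  have T: "d_iota_pi X w \<in> tangent_st X" "d_iota_pi X \<nu> \<in> tangent_st X"
    using d_iota_pi_in_tangent_st[OF X] w \<nu> pla_subset_gla by blast+
  have "koszul_form a X (d_iota_pi X w) (d_iota_pi X \<nu>)
      (fst w ** d_iota_pi X \<nu> - d_iota_pi X \<nu> ** snd w - (1/2) *\<^sub>R d_iota_pi X (lie_bracket w \<nu>)) U' = 0"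
    using koszul_form_lift_p[OF X a(1) T U'] unfolding lift_p_d_iota_pi[OF X w a] lift_p_d_iota_pi[OF X \<nu> a] .
  then show ?thesis
    unfolding U_eq matrix_add_ldistrib matrix_add_rdistrib koszul_form_conj[OF R1(1) \<theta>1(1)]
      koszul_form_add alpha_metric_conj[OF R1(1) \<theta>1(1)] by simp
qed

definition covariant_derivative_at ::
  "real \<Rightarrow> (real \<Rightarrow> real^'k^'n) \<Rightarrow> (real \<Rightarrow> real^'k^'n) \<Rightarrow> (real \<Rightarrow> real^'k^'n) \<Rightarrow> real set
    \<Rightarrow> real \<Rightarrow> real^'k^'n \<Rightarrow> bool" where
  "covariant_derivative_at a \<gamma> \<gamma>' W I t D \<longleftrightarrow>
     (\<exists>W'. (W has_vector_derivative W') (at t within I) \<and>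
          (\<forall>U\<in>tangent_st (\<gamma> t). koszul_form a (\<gamma> t) (\<gamma>' t) (W t) W' U = alpha_metric a (\<gamma> t) D U))"

lemma lin_isometry_st_in_tangent_st: "lin_isometry_st a X Y L \<Longrightarrow> V \<in> tangent_st X \<Longrightarrow> L V \<in> tangent_st Y"
  unfolding lin_isometry_st_def bij_betw_def by blast

lemma lin_isometry_st_inj_on: "lin_isometry_st a X Y L \<Longrightarrow> inj_on L (tangent_st X)"
  unfolding lin_isometry_st_def bij_betw_def by blast

lemma lin_isometry_st_zero: "lin_isometry_st a X Y L \<Longrightarrow> L 0 = 0"
  using zero_in_tangent_st unfolding lin_isometry_st_def by (metis scaleR_zero_left add_0)

lemma parallel_along_transported_imp_constant:
  fixes Y Y' Z :: "real \<Rightarrow> real^'k^'n" and B :: "real \<Rightarrow> real^'k^'n \<Rightarrow> real^'k^'n"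
  assumes a: "a \<noteq> -1"
    and iso: "\<And>t. t \<in> I \<Longrightarrow> Y t \<in> stiefel \<and> lin_isometry_st a X (Y t) (B t)"
    and Y': "\<And>t. t \<in> I \<Longrightarrow> (Y has_vector_derivative Y' t) (at t within I)"
    and Z: "\<forall>t\<in>I. Z t \<in> tangent_st X \<and> Z differentiable (at t within I)"
    and covariant: "\<And>t Zd. t \<in> I \<Longrightarrow> at t within I \<noteq> bot \<Longrightarrow> (Z has_vector_derivative Zd) (at t within I)
        \<Longrightarrow> covariant_derivative_at a Y Y' (\<lambda>s. B s (Z s)) I t (B t Zd)"
    and parallel: "parallel_along a Y (\<lambda>t. B t (Z t)) I"
    and t: "t \<in> I"
  shows "(Z has_vector_derivative 0) (at t within I)"
proof (cases "at t within I = bot")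
  case True
  then show ?thesis
    by (rule has_vector_derivative_at_bot)
next
  case False
  obtain G W' where
    derivs: "\<forall>t\<in>I. (Y has_vector_derivative G t) (at t within I)
        \<and> ((\<lambda>t. B t (Z t)) has_vector_derivative W' t) (at t within I)"
    and koszul: "\<forall>t\<in>I. \<forall>U\<in>tangent_st (Y t). koszul_form a (Y t) (G t) (B t (Z t)) (W' t) U = 0"
    using parallel unfolding parallel_along_iff_koszul_form by blast
  define Zd where "Zd = vector_derivative Z (at t within I)"
  have Z': "(Z has_vector_derivative Zd) (at t within I)"
    unfolding Zd_def using Z t vector_derivative_works by blast
  have Zd: "Zd \<in> tangent_st X"
    using has_vector_derivative_in_tangent_st[OF _ t False Z'] Z by blast
  obtain W where W: "((\<lambda>s. B s (Z s)) has_vector_derivative W) (at t within I)"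
    and cov: "\<forall>U\<in>tangent_st (Y t). koszul_form a (Y t) (Y' t) (B t (Z t)) W U = alpha_metric a (Y t) (B t Zd) U"
    using covariant[OF t False Z'] unfolding covariant_derivative_at_def by blast
  have "G t = Y' t" and "W' t = W"
    using vector_derivative_unique_within[OF False] derivs Y' W t by blast+
  then have "\<forall>U\<in>tangent_st (Y t). alpha_metric a (Y t) (B t Zd) U = 0"
    using koszul cov t by auto
  moreover have Y_t: "transpose (Y t) ** Y t = mat 1" and B_t: "lin_isometry_st a X (Y t) (B t)"
    using iso[OF t] unfolding stiefel_def by auto
  ultimately have "B t Zd = B t 0"
    using alpha_metric_nondegenerate[OF Y_t a lin_isometry_st_in_tangent_st[OF B_t Zd]]
    by (simp add: lin_isometry_st_zero[OF B_t])
  then have "Zd = 0"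
    using lin_isometry_st_inj_on[OF B_t] Zd zero_in_tangent_st by (meson inj_onD)
  then show ?thesis
    using Z' by simp
qed

lemma parallel_along_transported_if_constant:
  fixes Y Y' Z :: "real \<Rightarrow> real^'k^'n" and B :: "real \<Rightarrow> real^'k^'n \<Rightarrow> real^'k^'n"
  assumes iso: "\<And>t. t \<in> I \<Longrightarrow> lin_isometry_st a X (Y t) (B t)"
    and Y': "\<And>t. t \<in> I \<Longrightarrow> (Y has_vector_derivative Y' t) (at t within I)"
    and Z: "\<forall>t\<in>I. Z t \<in> tangent_st X"
    and covariant: "\<And>t Zd. t \<in> I \<Longrightarrow> at t within I \<noteq> bot \<Longrightarrow> (Z has_vector_derivative Zd) (at t within I)
        \<Longrightarrow> covariant_derivative_at a Y Y' (\<lambda>s. B s (Z s)) I t (B t Zd)"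
    and Z_const: "\<forall>t\<in>I. (Z has_vector_derivative 0) (at t within I)"
  shows "parallel_along a Y (\<lambda>t. B t (Z t)) I"
proof -
  \<comment> \<open>where \<open>t\<close> is isolated in \<open>I\<close> every vector is a derivative, and zero velocity makes the Koszul form vanish\<close>
  define G where "G t = (if at t within I = bot then 0 else Y' t)" for t
  have "\<exists>W. ((\<lambda>s. B s (Z s)) has_vector_derivative W) (at t within I) \<and>
      (\<forall>U\<in>tangent_st (Y t). koszul_form a (Y t) (Y' t) (B t (Z t)) W U = 0)"
    if "t \<in> I" "at t within I \<noteq> bot" for t
    using covariant[OF that Z_const[rule_format, OF that(1)]] lin_isometry_st_zero[OF iso[OF that(1)]]
    unfolding covariant_derivative_at_def by (simp add: alpha_metric_zero_left)
  then obtain W where W: "\<And>t. t \<in> I \<Longrightarrow> at t within I \<noteq> bot \<Longrightarrow>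
      ((\<lambda>s. B s (Z s)) has_vector_derivative W t) (at t within I) \<and>
      (\<forall>U\<in>tangent_st (Y t). koszul_form a (Y t) (Y' t) (B t (Z t)) (W t) U = 0)"
    by metis
  define W' where "W' t = (if at t within I = bot then 0 else W t)" for t
  show ?thesis
    unfolding parallel_along_iff_koszul_form
  proof (intro exI conjI ballI)
    fix t assume t: "t \<in> I"
    show "(Y has_vector_derivative G t) (at t within I)"
      using Y'[OF t] has_vector_derivative_at_bot unfolding G_def by auto
    show "((\<lambda>t. B t (Z t)) has_vector_derivative W' t) (at t within I)"
      using W[OF t] has_vector_derivative_at_bot unfolding W'_def by auto
    show "B t (Z t) \<in> tangent_st (Y t)"
      using lin_isometry_st_in_tangent_st[OF iso[OF t]] Z t by blast
    show "koszul_form a (Y t) (G t) (B t (Z t)) (W' t) U = 0" if "U \<in> tangent_st (Y t)" for U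
      using W[OF t] that koszul_form_zero_velocity unfolding G_def W'_def by auto
  qed
qed

locale stiefel_rolling =
  fixes a :: real and X :: "real^'k^'n" and I :: "real set"
    and \<beta> \<beta>' :: "real \<Rightarrow> real^'k^'n"
    and S :: "real \<Rightarrow> (real^'n^'n) \<times> (real^'k^'k) \<Rightarrow> (real^'n^'n) \<times> (real^'k^'k)"
    and R :: "real \<Rightarrow> real^'n^'n" and \<theta> :: "real \<Rightarrow> real^'k^'k"
  assumes a: "a \<noteq> -1" "a \<noteq> 0"
    and X: "X \<in> stiefel"
    and \<beta>: "\<forall>t\<in>I. \<beta> t \<in> tangent_st X"
    and \<beta>': "\<forall>t\<in>I. (\<beta> has_vector_derivative \<beta>' t) (at t within I)"
    and S: "\<forall>t\<in>I. S t \<in> O_p a X"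
    and S': "\<forall>\<xi>\<in>pla a X. \<forall>t\<in>I. ((\<lambda>s. S s \<xi>) has_vector_derivative
               (- (1/2)) *\<^sub>R pr_p a X (lie_bracket (S t (d_iota_pi_inv a X (\<beta>' t))) (S t \<xi>)))
               (at t within I)"
    and orth: "\<forall>t\<in>I. orthogonal_matrix (R t) \<and> orthogonal_matrix (\<theta> t)"
    and R\<theta>': "\<forall>t\<in>I. ((\<lambda>s. (R s, \<theta> s)) has_vector_derivative
               dL (R t, \<theta> t) (S t (d_iota_pi_inv a X (\<beta>' t)))) (at t within I)"
begin

definition rolled_curve :: "real \<Rightarrow> real^'k^'n" where
  "rolled_curve t = iota_pi X (R t, \<theta> t)"

definition rolling_map :: "real \<Rightarrow> real^'k^'n \<Rightarrow> real^'k^'n" where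
  "rolling_map t V = d_iota_pi_at X (R t, \<theta> t) (dL (R t, \<theta> t) (S t (d_iota_pi_inv a X V)))"

lemma X_orthonormal: "transpose X ** X = mat 1"
  using X by (simp add: stiefel_def)

lemma rolling_map_eq:
  assumes "t \<in> I" and "V \<in> tangent_st X"
  shows "rolling_map t V = R t ** d_iota_pi X (S t (lift_p a X V)) ** transpose (\<theta> t)"
proof -
  have "S t (lift_p a X V) \<in> gla"
    using O_p_in_pla[OF S[rule_format, OF assms(1)] lift_p_in_pla[OF X_orthonormal assms(2) a]]
      pla_subset_gla by blast
  then show ?thesis
    unfolding rolling_map_def d_iota_pi_inv_eq_lift_p[OF X_orthonormal assms(2) a]
    by (simp add: d_iota_pi_at_dL)
qed

lemma rolling_map_isometry:
  assumes "t \<in> I"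
  shows "rolled_curve t \<in> stiefel \<and> lin_isometry_st a X (rolled_curve t) (rolling_map t)"
  using iota_pi_in_stiefel[OF X] lin_isometry_st_transport[OF X_orthonormal a _ _ S[rule_format, OF assms]]
    orth assms rolling_map_eq[OF assms] unfolding rolled_curve_def iota_pi_def by auto

lemma rolled_curve_has_derivative:
  assumes "t \<in> I"
  shows "(rolled_curve has_vector_derivative rolling_map t (\<beta>' t)) (at t within I)"
  using has_vector_derivative_iota_pi[OF R\<theta>'[rule_format, OF assms]]
  unfolding rolled_curve_def[abs_def] rolling_map_def .

lemma rolling_map_covariant_derivative:
  assumes t: "t \<in> I" and nontrivial: "at t within I \<noteq> bot"
    and Z: "\<forall>s\<in>I. Z s \<in> tangent_st X" and Z': "(Z has_vector_derivative Zd) (at t within I)"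
  shows "covariant_derivative_at a rolled_curve (\<lambda>t. rolling_map t (\<beta>' t)) (\<lambda>s. rolling_map s (Z s)) I t
    (rolling_map t Zd)"
proof -
  note X = X_orthonormal
  have \<beta>'_t: "\<beta>' t \<in> tangent_st X"
    using has_vector_derivative_in_tangent_st[OF \<beta> t nontrivial] \<beta>' t by blast
  have Zd: "Zd \<in> tangent_st X"
    using has_vector_derivative_in_tangent_st[OF Z t nontrivial Z'] .
  define w where "w = S t (lift_p a X (\<beta>' t))"
  define \<nu> where "\<nu> = S t (lift_p a X (Z t))"
  have S_t: "S t \<in> O_p a X"
    using S t by blast
  have w: "w \<in> pla a X" and \<nu>: "\<nu> \<in> pla a X"
    unfolding w_def \<nu>_def using O_p_in_pla[OF S_t] lift_p_in_pla[OF X _ a] \<beta>'_t Z t by blast+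
  have lift_\<beta>': "d_iota_pi_inv a X (\<beta>' t) = lift_p a X (\<beta>' t)"
    using d_iota_pi_inv_eq_lift_p[OF X \<beta>'_t a] .
  have "((\<lambda>s. R s ** d_iota_pi X (S s (lift_p a X (Z s))) ** transpose (\<theta> s)) has_vector_derivative
      R t ** (fst w ** d_iota_pi X \<nu> - d_iota_pi X \<nu> ** snd w - (1/2) *\<^sub>R d_iota_pi X (lie_bracket w \<nu>)
              + d_iota_pi X (S t (lift_p a X Zd))) ** transpose (\<theta> t)) (at t within I)"
  proof -
    have "\<forall>\<xi>\<in>pla a X. ((\<lambda>s. S s \<xi>) has_vector_derivative
        (- (1/2)) *\<^sub>R pr_p a X (lie_bracket w (S t \<xi>))) (at t within I)"
      and "((\<lambda>s. (R s, \<theta> s)) has_vector_derivative dL (R t, \<theta> t) w) (at t within I)"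
      using S' R\<theta>' t unfolding w_def lift_\<beta>'[symmetric] by blast+
    from has_vector_derivative_transported[OF X a t S this w Z Z' Zd]
    show ?thesis
      unfolding \<nu>_def .
  qed
  then have "((\<lambda>s. rolling_map s (Z s)) has_vector_derivative
      R t ** (fst w ** d_iota_pi X \<nu> - d_iota_pi X \<nu> ** snd w - (1/2) *\<^sub>R d_iota_pi X (lie_bracket w \<nu>)
              + d_iota_pi X (S t (lift_p a X Zd))) ** transpose (\<theta> t)) (at t within I)"
    by (rule has_vector_derivative_transform[OF t, rotated]) (use Z rolling_map_eq in auto)
  moreover have "orthogonal_matrix (R t)" "orthogonal_matrix (\<theta> t)"
    using orth t by auto
  note transported = koszul_form_transported[OF X a this w \<nu>]
  ultimately show ?thesis
    unfolding covariant_derivative_at_def rolled_curve_def iota_pi_def fst_conv snd_conv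
    using rolling_map_eq[OF t] \<beta>'_t Zd Z t transported
    unfolding w_def \<nu>_def by auto
qed

lemma intrinsic_rolling_rolled_curve: "intrinsic_rolling a X I \<beta> rolled_curve rolling_map"
  unfolding intrinsic_rolling_def
proof (intro conjI ballI allI impI)
  fix t assume "t \<in> I"
  then show "\<beta> t \<in> tangent_st X" "rolled_curve t \<in> stiefel"
    "lin_isometry_st a X (rolled_curve t) (rolling_map t)"
    "\<exists>v. (\<beta> has_vector_derivative v) (at t within I) \<and>
         (rolled_curve has_vector_derivative rolling_map t v) (at t within I)"
    using \<beta> \<beta>' rolling_map_isometry rolled_curve_has_derivative by blast+
next
  fix Z assume Z: "\<forall>t\<in>I. Z t \<in> tangent_st X \<and> Z differentiable (at t within I)"
  note rolling = rolling_map_isometry rolled_curve_has_derivative rolling_map_covariant_derivative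
  show "parallel_along a rolled_curve (\<lambda>t. rolling_map t (Z t)) I
      \<longleftrightarrow> (\<forall>t\<in>I. (Z has_vector_derivative 0) (at t within I))"
    using parallel_along_transported_imp_constant[OF a(1) rolling(1,2) Z]
      parallel_along_transported_if_constant[OF _ rolling(2)] Z rolling
    by blast
qed

end

theorem corollary5p8:
  fixes a :: real and X :: "real^'k^'n" and I :: "real set"
    and \<beta> \<beta>' :: "real \<Rightarrow> real^'k^'n"
    and S :: "real \<Rightarrow> (real^'n^'n) \<times> (real^'k^'k) \<Rightarrow> (real^'n^'n) \<times> (real^'k^'k)"
    and R :: "real \<Rightarrow> real^'n^'n" and \<theta> :: "real \<Rightarrow> real^'k^'k"
  assumes "a \<noteq> -1" and "a \<noteq> 0"
    and "X \<in> stiefel"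
    and "is_interval I" and "0 \<in> I"
    and "\<forall>t\<in>I. \<beta> t \<in> tangent_st X"
    and "\<forall>t\<in>I. (\<beta> has_vector_derivative \<beta>' t) (at t within I)"
    and "\<forall>t\<in>I. S t \<in> O_p a X"
    and "\<forall>\<xi>\<in>pla a X. S 0 \<xi> = \<xi>"
    and "\<forall>\<xi>\<in>pla a X. \<forall>t\<in>I. ((\<lambda>s. S s \<xi>) has_vector_derivative
            (- (1/2)) *\<^sub>R pr_p a X (lie_bracket (S t (d_iota_pi_inv a X (\<beta>' t))) (S t \<xi>)))
            (at t within I)"
    and "\<forall>t\<in>I. orthogonal_matrix (R t) \<and> orthogonal_matrix (\<theta> t)"
    and "R 0 = mat 1" and "\<theta> 0 = mat 1"
    and "\<forall>t\<in>I. ((\<lambda>s. (R s, \<theta> s)) has_vector_derivative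
            dL (R t, \<theta> t) (S t (d_iota_pi_inv a X (\<beta>' t)))) (at t within I)"
  shows "intrinsic_rolling a X I \<beta> (\<lambda>t. iota_pi X (R t, \<theta> t))
           (\<lambda>t V. d_iota_pi_at X (R t, \<theta> t) (dL (R t, \<theta> t) (S t (d_iota_pi_inv a X V))))"
proof -
  interpret stiefel_rolling a X I \<beta> \<beta>' S R \<theta>
    using assms by unfold_locales auto
  show ?thesis
    using intrinsic_rolling_rolled_curve unfolding rolled_curve_def[abs_def] rolling_map_def[abs_def] .
qed

end
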